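(* Let $L$ be an algebraic frame, $X_L$ its Priestley space, and $Y_L$ the spatial part of $X_L$. The following are equivalent: (1) $L$ is a coherent frame; (2) $X_L$ is a coherent L-space; (3) $Y_L$ is a spectral space.
   Context: A frame is a complete lattice satisfying $a\wedge\bigvee S=\bigvee\{a\wedge s\mid s\in S\}$. In a frame $L$, $a\ll b$ means whenever $b\le\bigvee S$ there is finite $T\subseteq S$ with $a\le\bigvee T$; $a$ is compact if $a\ll a$; $K(L)$ is the set of compact elements; $L$ is compact if its top is compact. $L$ is algebraic if $a=\bigvee\{b\in K(L)\mid b\le a\}$ for all $a$; arithmetic if algebraic and $\ll$ is stable ($a\ll b,c$ implies $a\ll b\wedge c$); coherent if arithmetic and compact. A Priestley space is a Stone space $X$ with a partial order such that clopen upsets separate points. An L-space is a Priestley space in which the downset of each clopen set is clopen and the closure of each open upset is open. ${\sf ClopUp}(X)$ is the set of clopen upsets; $\mathrm{cl}$ denotes closure. The Priestley space $X_L$ is the set of prime filters of $L$ ordered by inclusion with topology generated by the sets $\varphi(a)=\{x\mid a\in x\}$ and their complements. The spatial part of $X$ is $Y=\{y\in X\mid{\downarrow}y\text{ clopen}\}$, topologized by declaring $V\subseteq Y$ open iff $V=U\cap Y$ for some $U\in{\sf ClopUp}(X)$. A Scott upset is a closed upset $F$ with $\min F\subseteq Y$; ${\sf ClopSUp}(X)$ is the set of clopen Scott upsets. For $U,V\in{\sf ClopUp}(X)$, $V\ll U$ means that for every open upset $W$, $U\subseteq\mathrm{cl}\,W$ implies $V\subseteq W$; $\ker U=\bigcup\{V\in{\sf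 ClopUp}(X)\mid V\ll U\}$; $\mathrm{core}\,U=\bigcup\{V\in{\sf ClopSUp}(X)\mid V\subseteq U\}$. A coherent L-space is an L-space $X$ such that $\mathrm{core}\,U$ is dense in $U$ for each $U\in{\sf ClopUp}(X)$, $\ker(U\cap V)=\ker U\cap\ker V$ for all $U,V\in{\sf ClopUp}(X)$, and $X=\ker X$. A spectral space is a compact sober space with a basis of compact open sets in which the intersection of two compact open sets is compact. *)

theory Defs
  imports "HOL-Analysis.Analysis"
begin

definition frame_law :: "'a::complete_lattice itself \<Rightarrow> bool" where
  "frame_law _ \<longleftrightarrow> (\<forall>(a::'a) S. inf a (Sup S) = Sup ((\<lambda>s. inf a s) ` S))"

definition way_below :: "'a::complete_lattice \<Rightarrow> 'a \<Rightarrow> bool" where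
  "way_below a b \<longleftrightarrow> (\<forall>S. b \<le> Sup S \<longrightarrow> (\<exists>T. finite T \<and> T \<subseteq> S \<and> a \<le> Sup T))"

definition compact_el :: "'a::complete_lattice \<Rightarrow> bool" where
  "compact_el a \<longleftrightarrow> way_below a a"

definition algebraic_frame :: "'a::complete_lattice itself \<Rightarrow> bool" where
  "algebraic_frame T \<longleftrightarrow> frame_law T \<and>
     (\<forall>a::'a. a = Sup {b. compact_el b \<and> b \<le> a})"

definition arithmetic_frame :: "'a::complete_lattice itself \<Rightarrow> bool" where
  "arithmetic_frame T \<longleftrightarrow> algebraic_frame T \<and>
     (\<forall>a b c::'a. way_below a b \<and> way_below a c \<longrightarrow> way_below a (inf b c))"

definition coherent_frame :: "'a::complete_lattice itself \<Rightarrow> bool" where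
  "coherent_frame T \<longleftrightarrow> arithmetic_frame T \<and> compact_el (top::'a)"

definition prime_filter :: "'a::complete_lattice set \<Rightarrow> bool" where
  "prime_filter F \<longleftrightarrow> top \<in> F \<and> bot \<notin> F
     \<and> (\<forall>a b. a \<in> F \<and> a \<le> b \<longrightarrow> b \<in> F)
     \<and> (\<forall>a b. a \<in> F \<and> b \<in> F \<longrightarrow> inf a b \<in> F)
     \<and> (\<forall>a b. sup a b \<in> F \<longrightarrow> a \<in> F \<or> b \<in> F)"

definition pts :: "'a::complete_lattice set set" where
  "pts = {F. prime_filter F}"

definition phi :: "'a::complete_lattice \<Rightarrow> 'a set set" where
  "phi a = {x \<in> pts. a \<in> x}"

text \<open>The Priestley topology on the set of prime filters (order: inclusion).\<close>
definition XL_top :: "'a::complete_lattice set topology" where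
  "XL_top = topology_generated_by (range phi \<union> range (\<lambda>a. pts - phi a))"

definition clopenin :: "'p topology \<Rightarrow> 'p set \<Rightarrow> bool" where
  "clopenin X U \<longleftrightarrow> closedin X U \<and> openin X U"

definition upset :: "'p topology \<Rightarrow> ('p \<Rightarrow> 'p \<Rightarrow> bool) \<Rightarrow> 'p set \<Rightarrow> bool" where
  "upset X le U \<longleftrightarrow> U \<subseteq> topspace X \<and> (\<forall>x\<in>U. \<forall>y\<in>topspace X. le x y \<longrightarrow> y \<in> U)"

definition downset_of :: "'p topology \<Rightarrow> ('p \<Rightarrow> 'p \<Rightarrow> bool) \<Rightarrow> 'p set \<Rightarrow> 'p set" where
  "downset_of X le A = {y \<in> topspace X. \<exists>x\<in>A. le y x}"

definition partial_order_on_space :: "'p topology \<Rightarrow> ('p \<Rightarrow> 'p \<Rightarrow> bool) \<Rightarrow> bool" where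
  "partial_order_on_space X le \<longleftrightarrow>
     (\<forall>x\<in>topspace X. le x x)
     \<and> (\<forall>x\<in>topspace X. \<forall>y\<in>topspace X. le x y \<and> le y x \<longrightarrow> x = y)
     \<and> (\<forall>x\<in>topspace X. \<forall>y\<in>topspace X. \<forall>z\<in>topspace X. le x y \<and> le y z \<longrightarrow> le x z)"

definition stone_space :: "'p topology \<Rightarrow> bool" where
  "stone_space X \<longleftrightarrow> compact_space X \<and> Hausdorff_space X
     \<and> (\<forall>U x. openin X U \<and> x \<in> U \<longrightarrow> (\<exists>C. clopenin X C \<and> x \<in> C \<and> C \<subseteq> U))"

definition ClopUp :: "'p topology \<Rightarrow> ('p \<Rightarrow> 'p \<Rightarrow> bool) \<Rightarrow> 'p set set" where
  "ClopUp X le = {U. clopenin X U \<and> upset X le U}"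

definition priestley_space :: "'p topology \<Rightarrow> ('p \<Rightarrow> 'p \<Rightarrow> bool) \<Rightarrow> bool" where
  "priestley_space X le \<longleftrightarrow> stone_space X \<and> partial_order_on_space X le
     \<and> (\<forall>x\<in>topspace X. \<forall>y\<in>topspace X. \<not> le x y \<longrightarrow> (\<exists>U\<in>ClopUp X le. x \<in> U \<and> y \<notin> U))"

definition L_space :: "'p topology \<Rightarrow> ('p \<Rightarrow> 'p \<Rightarrow> bool) \<Rightarrow> bool" where
  "L_space X le \<longleftrightarrow> priestley_space X le
     \<and> (\<forall>U. clopenin X U \<longrightarrow> clopenin X (downset_of X le U))
     \<and> (\<forall>U. openin X U \<and> upset X le U \<longrightarrow> openin X (X closure_of U))"

definition spatial_part :: "'p topology \<Rightarrow> ('p \<Rightarrow> 'p \<Rightarrow> bool) \<Rightarrow> 'p set" where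
  "spatial_part X le = {y \<in> topspace X. clopenin X (downset_of X le {y})}"

definition spatial_top :: "'p topology \<Rightarrow> ('p \<Rightarrow> 'p \<Rightarrow> bool) \<Rightarrow> 'p topology" where
  "spatial_top X le = topology_generated_by ((\<lambda>U. U \<inter> spatial_part X le) ` ClopUp X le)"

definition minimal_of :: "('p \<Rightarrow> 'p \<Rightarrow> bool) \<Rightarrow> 'p set \<Rightarrow> 'p set" where
  "minimal_of le F = {x \<in> F. \<forall>y\<in>F. le y x \<longrightarrow> y = x}"

definition scott_upset :: "'p topology \<Rightarrow> ('p \<Rightarrow> 'p \<Rightarrow> bool) \<Rightarrow> 'p set \<Rightarrow> bool" where
  "scott_upset X le F \<longleftrightarrow> closedin X F \<and> upset X le F \<and> minimal_of le F \<subseteq> spatial_part X le"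

definition ClopSUp :: "'p topology \<Rightarrow> ('p \<Rightarrow> 'p \<Rightarrow> bool) \<Rightarrow> 'p set set" where
  "ClopSUp X le = {U. clopenin X U \<and> scott_upset X le U}"

definition way_below_sp :: "'p topology \<Rightarrow> ('p \<Rightarrow> 'p \<Rightarrow> bool) \<Rightarrow> 'p set \<Rightarrow> 'p set \<Rightarrow> bool" where
  "way_below_sp X le V U \<longleftrightarrow>
     (\<forall>W. openin X W \<and> upset X le W \<and> U \<subseteq> X closure_of W \<longrightarrow> V \<subseteq> W)"

definition ker_sp :: "'p topology \<Rightarrow> ('p \<Rightarrow> 'p \<Rightarrow> bool) \<Rightarrow> 'p set \<Rightarrow> 'p set" where
  "ker_sp X le U = \<Union>{V \<in> ClopUp X le. way_below_sp X le V U}"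

definition core_sp :: "'p topology \<Rightarrow> ('p \<Rightarrow> 'p \<Rightarrow> bool) \<Rightarrow> 'p set \<Rightarrow> 'p set" where
  "core_sp X le U = \<Union>{V \<in> ClopSUp X le. V \<subseteq> U}"

definition coherent_L_space :: "'p topology \<Rightarrow> ('p \<Rightarrow> 'p \<Rightarrow> bool) \<Rightarrow> bool" where
  "coherent_L_space X le \<longleftrightarrow> L_space X le
     \<and> (\<forall>U\<in>ClopUp X le. U \<subseteq> X closure_of (core_sp X le U))
     \<and> (\<forall>U\<in>ClopUp X le. \<forall>V\<in>ClopUp X le. ker_sp X le (U \<inter> V) = ker_sp X le U \<inter> ker_sp X le V)
     \<and> topspace X = ker_sp X le (topspace X)"

definition irreducible_in :: "'p topology \<Rightarrow> 'p set \<Rightarrow> bool" where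
  "irreducible_in T C \<longleftrightarrow> C \<noteq> {} \<and> C \<subseteq> topspace T \<and>
     (\<forall>A B. closedin T A \<and> closedin T B \<and> C \<subseteq> A \<union> B \<longrightarrow> C \<subseteq> A \<or> C \<subseteq> B)"

definition sober_space :: "'p topology \<Rightarrow> bool" where
  "sober_space T \<longleftrightarrow> (\<forall>C. closedin T C \<and> irreducible_in T C \<longrightarrow>
     (\<exists>!x. x \<in> topspace T \<and> C = T closure_of {x}))"

definition spectral_space :: "'p topology \<Rightarrow> bool" where
  "spectral_space T \<longleftrightarrow> compact_space T \<and> sober_space T
     \<and> (\<forall>U x. openin T U \<and> x \<in> U \<longrightarrow> (\<exists>K. openin T K \<and> compactin T K \<and> x \<in> K \<and> K \<subseteq> U))
     \<and> (\<forall>K1 K2. openin T K1 \<and> compactin T K1 \<and> openin T K2 \<and> compactin T K2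
            \<longrightarrow> compactin T (K1 \<inter> K2))"

end

theory Submission
  imports Defs
begin

text \<open>
  Everything is transported along \<open>phi a = {x. a \<in> x}\<close>. The prime filter theorem makes \<open>phi\<close> an
  order embedding, the Alexander subbase theorem makes \<open>X\<^sub>L\<close> compact, and compactness then identifies
  the clopen upsets with the sets \<open>phi a\<close>; moreover the closure of \<open>\<Union>(phi ` A)\<close> is \<open>phi (Sup A)\<close>.
  Consequently \<open>phi b\<close> is way below \<open>phi a\<close> in \<open>X\<^sub>L\<close> iff \<open>b\<close> is way below \<open>a\<close> in \<open>L\<close>, the kernel of
  \<open>phi a\<close> is the union of those \<open>phi b\<close>, and the two kernel conditions of a coherent L-space say
  precisely that the way-below relation is stable and that \<open>top\<close> is compact. Density of the core
  holds in every algebraic frame, because the minimal points of \<open>phi k\<close> for compact \<open>k\<close> are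
  completely prime filters, which are exactly the points of the spatial part \<open>Y\<^sub>L\<close>.

  The opens of \<open>Y\<^sub>L\<close> are the traces \<open>phi a \<inter> Y\<^sub>L\<close>, and as algebraic frames are spatial, the compact
  opens are the traces of the compact elements. So \<open>Y\<^sub>L\<close> is always sober with a basis of compact
  opens, and it is spectral iff \<open>top\<close> is compact and compact elements are closed under binary
  meets, which for an algebraic frame is coherence.
\<close>

section \<open>Frames and prime filters\<close>

lemma frame_inf_Sup:
  "frame_law TYPE('a::complete_lattice) \<Longrightarrow> inf (a::'a) (Sup S) = (SUP s\<in>S. inf a s)"
  unfolding frame_law_def by blast

lemma frame_inf_sup_distrib:
  assumes "frame_law TYPE('a::complete_lattice)"
  shows "inf (a::'a) (sup b c) = sup (inf a b) (inf a c)"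
  using frame_inf_Sup[OF assms, of a "{b, c}"] by simp

lemma algebraic_frame_law: "algebraic_frame TYPE('a::complete_lattice) \<Longrightarrow> frame_law TYPE('a)"
  unfolding algebraic_frame_def by blast

lemma algebraic_frame_Sup_compact:
  "algebraic_frame TYPE('a::complete_lattice) \<Longrightarrow> (a::'a) = Sup {k. compact_el k \<and> k \<le> a}"
  unfolding algebraic_frame_def by blast

lemma prime_filter_top: "prime_filter x \<Longrightarrow> top \<in> x"
  unfolding prime_filter_def by blast

lemma prime_filter_bot: "prime_filter x \<Longrightarrow> bot \<notin> x"
  unfolding prime_filter_def by blast

lemma prime_filter_upD: "prime_filter x \<Longrightarrow> a \<in> x \<Longrightarrow> a \<le> b \<Longrightarrow> b \<in> x"
  unfolding prime_filter_def by blast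

lemma prime_filter_inf_iff: "prime_filter x \<Longrightarrow> inf a b \<in> x \<longleftrightarrow> a \<in> x \<and> b \<in> x"
  unfolding prime_filter_def by (meson inf_le1 inf_le2)

lemma prime_filter_sup_iff: "prime_filter x \<Longrightarrow> sup a b \<in> x \<longleftrightarrow> a \<in> x \<or> b \<in> x"
  unfolding prime_filter_def by (meson sup_ge1 sup_ge2)

lemma prime_filter_Inf_finite: "finite T \<Longrightarrow> prime_filter x \<Longrightarrow> T \<subseteq> x \<Longrightarrow> Inf T \<in> x"
  by (induction T rule: finite_induct) (simp_all add: prime_filter_top prime_filter_inf_iff)

lemma prime_filter_Sup_finite: "finite T \<Longrightarrow> prime_filter x \<Longrightarrow> Sup T \<in> x \<Longrightarrow> \<exists>t\<in>T. t \<in> x"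
  by (induction T rule: finite_induct) (auto simp: prime_filter_bot prime_filter_sup_iff)

lemma prime_filter_Inter_chain:
  assumes "C \<noteq> {}" "\<forall>x\<in>C. prime_filter x" "\<forall>x\<in>C. \<forall>y\<in>C. x \<subseteq> y \<or> y \<subseteq> x"
  shows "prime_filter (\<Inter>C)"
  unfolding prime_filter_def
proof (intro conjI allI impI)
  fix a b assume ab: "sup a b \<in> \<Inter>C"
  show "a \<in> \<Inter>C \<or> b \<in> \<Inter>C"
  proof (rule ccontr)
    assume "\<not> (a \<in> \<Inter>C \<or> b \<in> \<Inter>C)"
    then obtain x y where xy: "x \<in> C" "a \<notin> x" "y \<in> C" "b \<notin> y" by blast
    then have "a \<notin> x \<and> b \<notin> x \<or> a \<notin> y \<and> b \<notin> y" using assms(3) by blast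
    then show False using ab xy assms(2) prime_filter_sup_iff by blast
  qed
next
  show "top \<in> \<Inter>C" using assms(2) prime_filter_top by blast
  show "bot \<notin> \<Inter>C" using assms(1,2) prime_filter_bot by blast
next
  fix a b assume "a \<in> \<Inter>C \<and> a \<le> b"
  then show "b \<in> \<Inter>C" using assms(2) prime_filter_upD by blast
next
  fix a b assume "a \<in> \<Inter>C \<and> b \<in> \<Inter>C"
  then show "inf a b \<in> \<Inter>C" using assms(2) prime_filter_inf_iff by blast
qed

definition lattice_filter :: "'a::bounded_lattice set \<Rightarrow> bool" where
  "lattice_filter F \<longleftrightarrow> top \<in> F \<and> (\<forall>a b. a \<in> F \<and> a \<le> b \<longrightarrow> b \<in> F)
     \<and> (\<forall>a b. a \<in> F \<and> b \<in> F \<longrightarrow> inf a b \<in> F)"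

definition lattice_ideal :: "'a::bounded_lattice set \<Rightarrow> bool" where
  "lattice_ideal I \<longleftrightarrow> bot \<in> I \<and> (\<forall>a b. b \<in> I \<and> a \<le> b \<longrightarrow> a \<in> I)
     \<and> (\<forall>a b. a \<in> I \<and> b \<in> I \<longrightarrow> sup a b \<in> I)"

lemma prime_filter_imp_lattice_filter: "prime_filter x \<Longrightarrow> lattice_filter x"
  unfolding prime_filter_def lattice_filter_def by blast

lemma lattice_filter_adjoin:
  assumes "lattice_filter F"
  shows "lattice_filter {c. \<exists>m\<in>F. inf m a \<le> c}"
  unfolding lattice_filter_def
proof (intro conjI allI impI)
  fix c d assume "c \<in> {c. \<exists>m\<in>F. inf m a \<le> c} \<and> d \<in> {c. \<exists>m\<in>F. inf m a \<le> c}"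
  then obtain m1 m2 where m: "m1 \<in> F" "m2 \<in> F" "inf m1 a \<le> c" "inf m2 a \<le> d" by blast
  then have "inf m1 m2 \<in> F" using assms unfolding lattice_filter_def by blast
  moreover have "inf (inf m1 m2) a \<le> inf c d"
    using m by (meson inf.cobounded1 inf.cobounded2 le_inf_iff order_trans)
  ultimately show "inf c d \<in> {c. \<exists>m\<in>F. inf m a \<le> c}" by blast
next
  have "top \<in> F" using assms unfolding lattice_filter_def by blast
  then show "top \<in> {c. \<exists>m\<in>F. inf m a \<le> c}" by (intro CollectI bexI[of _ top]) auto
next
  fix c d assume "c \<in> {c. \<exists>m\<in>F. inf m a \<le> c} \<and> c \<le> d"
  then show "d \<in> {c. \<exists>m\<in>F. inf m a \<le> c}" using order_trans by blast
qed

lemma lattice_filter_Union_chain: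
  assumes "C \<noteq> {}" "\<forall>F\<in>C. lattice_filter F" "\<forall>F\<in>C. \<forall>G\<in>C. F \<subseteq> G \<or> G \<subseteq> F"
  shows "lattice_filter (\<Union>C)"
  unfolding lattice_filter_def
proof (intro conjI allI impI)
  obtain F where "F \<in> C" using assms(1) by blast
  then show "top \<in> \<Union>C" using assms(2) unfolding lattice_filter_def by blast
next
  fix a b assume "a \<in> \<Union>C \<and> a \<le> b"
  then obtain F where "F \<in> C" "a \<in> F" "a \<le> b" by blast
  moreover have "lattice_filter F" using \<open>F \<in> C\<close> assms(2) by blast
  ultimately show "b \<in> \<Union>C" unfolding lattice_filter_def by blast
next
  fix a b assume "a \<in> \<Union>C \<and> b \<in> \<Union>C"
  then obtain F G where "F \<in> C" "G \<in> C" "a \<in> F" "b \<in> G" by blast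
  then obtain H where "H \<in> C" "a \<in> H" "b \<in> H" using assms(3) by blast
  moreover have "lattice_filter H" using \<open>H \<in> C\<close> assms(2) by blast
  ultimately show "inf a b \<in> \<Union>C" unfolding lattice_filter_def by blast
qed

lemma maximal_disjoint_filter_prime:
  assumes FL: "frame_law TYPE('a::complete_lattice)"
    and M: "lattice_filter (M::'a set)" and I: "lattice_ideal I" and disj: "M \<inter> I = {}"
    and max: "\<And>G. lattice_filter G \<Longrightarrow> M \<subseteq> G \<Longrightarrow> G \<inter> I = {} \<Longrightarrow> G = M"
  shows "prime_filter M"
proof -
  have escape: "\<exists>m\<in>M. inf m a \<in> I" if "a \<notin> M" for a
  proof -
    define G where "G = {c. \<exists>m\<in>M. inf m a \<le> c}"
    have "M \<subseteq> G" "a \<in> G" using M unfolding G_def lattice_filter_def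
      by (auto intro: le_infI1 le_infI2)
    then have "G \<inter> I \<noteq> {}" using max[OF lattice_filter_adjoin[OF M]] that unfolding G_def by blast
    then obtain c m where "c \<in> I" "m \<in> M" "inf m a \<le> c" unfolding G_def by blast
    then show ?thesis using I unfolding lattice_ideal_def by blast
  qed
  show ?thesis
    unfolding prime_filter_def
  proof (intro conjI allI impI)
    fix a b assume ab: "sup a b \<in> M"
    show "a \<in> M \<or> b \<in> M"
    proof (rule ccontr)
      assume "\<not> (a \<in> M \<or> b \<in> M)"
      then obtain m1 m2 where m: "m1 \<in> M" "m2 \<in> M" "inf m1 a \<in> I" "inf m2 b \<in> I"
        using escape by blast
      let ?m = "inf (inf m1 m2) (sup a b)"
      have "?m \<in> M" using M m ab unfolding lattice_filter_def by blast
      have "?m = sup (inf (inf m1 m2) a) (inf (inf m1 m2) b)"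
        by (rule frame_inf_sup_distrib[OF FL])
      also have "\<dots> \<le> sup (inf m1 a) (inf m2 b)"
        by (intro sup_mono inf_mono) simp_all
      finally have "?m \<in> I" using I m unfolding lattice_ideal_def by blast
      with \<open>?m \<in> M\<close> disj show False by blast
    qed
  next
    show "top \<in> M" using M unfolding lattice_filter_def by blast
    show "bot \<notin> M" using disj I unfolding lattice_ideal_def by blast
  next
    fix a b assume "a \<in> M \<and> a \<le> b"
    then show "b \<in> M" using M unfolding lattice_filter_def by blast
  next
    fix a b assume "a \<in> M \<and> b \<in> M"
    then show "inf a b \<in> M" using M unfolding lattice_filter_def by blast
  qed
qed

lemma prime_filter_theorem:
  assumes FL: "frame_law TYPE('a::complete_lattice)"
    and F: "lattice_filter (F::'a set)" and I: "lattice_ideal I" and disj: "F \<inter> I = {}"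
  shows "\<exists>x. prime_filter x \<and> F \<subseteq> x \<and> x \<inter> I = {}"
proof -
  define A where "A = {G. lattice_filter G \<and> F \<subseteq> G \<and> G \<inter> I = {}}"
  have "\<exists>M\<in>A. \<forall>G\<in>A. M \<subseteq> G \<longrightarrow> G = M"
  proof (rule subset_Zorn_nonempty)
    show "A \<noteq> {}" using F disj by (auto simp: A_def)
    fix C assume "C \<noteq> {}" "subset.chain A C"
    then show "\<Union>C \<in> A"
      using lattice_filter_Union_chain[of C] by (auto simp: A_def subset_chain_def)
  qed
  then obtain M where M: "lattice_filter M" "F \<subseteq> M" "M \<inter> I = {}"
    and max: "\<And>G. G \<in> A \<Longrightarrow> M \<subseteq> G \<Longrightarrow> G = M"
    by (auto simp: A_def)
  have "prime_filter M"
  proof (rule maximal_disjoint_filter_prime[OF FL M(1) I M(3)])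
    fix G assume "lattice_filter G" "M \<subseteq> G" "G \<inter> I = {}"
    then show "G = M" using max M(2) unfolding A_def by blast
  qed
  with M show ?thesis by blast
qed

lemma prime_filter_separation:
  assumes FL: "frame_law TYPE('a::complete_lattice)" and "\<not> (a::'a) \<le> b"
  shows "\<exists>x. prime_filter x \<and> a \<in> x \<and> b \<notin> x"
proof -
  have "\<exists>x. prime_filter x \<and> {c. a \<le> c} \<subseteq> x \<and> x \<inter> {c. c \<le> b} = {}"
    using assms by (intro prime_filter_theorem)
      (auto simp: lattice_filter_def lattice_ideal_def intro: order_trans)
  then show ?thesis by auto
qed

lemma lattice_filter_generated:
  "lattice_filter {c. \<exists>T. finite T \<and> T \<subseteq> B \<and> Inf T \<le> (c::'a::complete_lattice)}"
  unfolding lattice_filter_def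
proof (intro conjI allI impI)
  fix c d assume "c \<in> {c. \<exists>T. finite T \<and> T \<subseteq> B \<and> Inf T \<le> c} \<and> d \<in> {c. \<exists>T. finite T \<and> T \<subseteq> B \<and> Inf T \<le> c}"
  then obtain T1 T2 where "finite T1" "T1 \<subseteq> B" "Inf T1 \<le> c" "finite T2" "T2 \<subseteq> B" "Inf T2 \<le> d"
    by blast
  then have "finite (T1 \<union> T2) \<and> T1 \<union> T2 \<subseteq> B \<and> Inf (T1 \<union> T2) \<le> inf c d"
    by (auto simp: Inf_union_distrib intro: le_infI1 le_infI2 inf_mono)
  then show "inf c d \<in> {c. \<exists>T. finite T \<and> T \<subseteq> B \<and> Inf T \<le> c}" by blast
next
  show "top \<in> {c. \<exists>T. finite T \<and> T \<subseteq> B \<and> Inf T \<le> c}"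
    by (intro CollectI exI[of _ "{}"]) simp
next
  fix c d assume "c \<in> {c. \<exists>T. finite T \<and> T \<subseteq> B \<and> Inf T \<le> c} \<and> c \<le> d"
  then show "d \<in> {c. \<exists>T. finite T \<and> T \<subseteq> B \<and> Inf T \<le> c}" using order_trans by blast
qed

lemma lattice_ideal_generated:
  "lattice_ideal {c. \<exists>T. finite T \<and> T \<subseteq> A \<and> (c::'a::complete_lattice) \<le> Sup T}"
  unfolding lattice_ideal_def
proof (intro conjI allI impI)
  fix c d assume "c \<in> {c. \<exists>T. finite T \<and> T \<subseteq> A \<and> c \<le> Sup T} \<and> d \<in> {c. \<exists>T. finite T \<and> T \<subseteq> A \<and> c \<le> Sup T}"
  then obtain T1 T2 where "finite T1" "T1 \<subseteq> A" "c \<le> Sup T1" "finite T2" "T2 \<subseteq> A" "d \<le> Sup T2"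
    by blast
  then have "finite (T1 \<union> T2) \<and> T1 \<union> T2 \<subseteq> A \<and> sup c d \<le> Sup (T1 \<union> T2)"
    by (auto simp: Sup_union_distrib intro: le_supI1 le_supI2 sup_mono)
  then show "sup c d \<in> {c. \<exists>T. finite T \<and> T \<subseteq> A \<and> c \<le> Sup T}" by blast
next
  show "bot \<in> {c. \<exists>T. finite T \<and> T \<subseteq> A \<and> c \<le> Sup T}"
    by (intro CollectI exI[of _ "{}"]) simp
next
  fix c d assume "d \<in> {c. \<exists>T. finite T \<and> T \<subseteq> A \<and> c \<le> Sup T} \<and> c \<le> d"
  then show "c \<in> {c. \<exists>T. finite T \<and> T \<subseteq> A \<and> c \<le> Sup T}" using order_trans by blast
qed

lemma prime_filter_Inf_le_Sup:
  assumes "finite A" "finite B" "Inf B \<le> Sup A" "prime_filter x"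
  shows "(\<exists>a\<in>A. a \<in> x) \<or> (\<exists>b\<in>B. b \<notin> x)"
proof (cases "B \<subseteq> x")
  case True
  then have "Sup A \<in> x"
    using prime_filter_Inf_finite[OF assms(2,4)] assms(3) prime_filter_upD[OF assms(4)] by blast
  then show ?thesis using prime_filter_Sup_finite[OF assms(1,4)] by blast
qed blast

lemma prime_filter_cover_finite:
  assumes FL: "frame_law TYPE('a::complete_lattice)"
    and cover: "\<And>x. prime_filter x \<Longrightarrow> (\<exists>a\<in>A. a \<in> x) \<or> (\<exists>b\<in>B. b \<notin> x)"
  shows "\<exists>A' B'. finite A' \<and> A' \<subseteq> A \<and> finite B' \<and> B' \<subseteq> (B::'a set) \<and> Inf B' \<le> Sup A'"
proof (rule ccontr)
  assume none: "\<not> ?thesis"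
  define F where "F = {c. \<exists>T. finite T \<and> T \<subseteq> B \<and> Inf T \<le> c}"
  define I where "I = {c. \<exists>T. finite T \<and> T \<subseteq> A \<and> c \<le> Sup T}"
  have "lattice_filter F" unfolding F_def by (rule lattice_filter_generated)
  moreover have "lattice_ideal I" unfolding I_def by (rule lattice_ideal_generated)
  moreover have "F \<inter> I = {}"
  proof -
    have False if "finite T1" "T1 \<subseteq> B" "finite T2" "T2 \<subseteq> A" "Inf T1 \<le> c" "c \<le> Sup T2"
      for c T1 T2
      using none that(1-4) order_trans[OF that(5,6)] by blast
    then show ?thesis unfolding F_def I_def by blast
  qed
  ultimately obtain x where x: "prime_filter x" "F \<subseteq> x" "x \<inter> I = {}"
    using prime_filter_theorem[OF FL] by blast
  have "a \<in> I" if "a \<in> A" for a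
    unfolding I_def using that by (intro CollectI exI[of _ "{a}"]) simp
  moreover have "b \<in> F" if "b \<in> B" for b
    unfolding F_def using that by (intro CollectI exI[of _ "{b}"]) simp
  ultimately show False using cover[OF x(1)] x(2,3) by blast
qed

section \<open>The Priestley space of a frame\<close>

lemma in_pts: "x \<in> pts \<longleftrightarrow> prime_filter x"
  unfolding pts_def by simp

lemma in_phi: "x \<in> phi a \<longleftrightarrow> prime_filter x \<and> a \<in> x"
  unfolding phi_def pts_def by simp

lemma phi_subset_pts: "phi a \<subseteq> pts"
  unfolding phi_def by blast

lemma phi_top: "phi top = pts"
  unfolding phi_def pts_def by (auto simp: prime_filter_top)

lemma phi_bot: "phi bot = {}"
  unfolding phi_def pts_def by (auto simp: prime_filter_bot)

lemma phi_inf: "phi (inf a b) = phi a \<inter> phi b"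
  unfolding phi_def pts_def by (auto simp: prime_filter_inf_iff)

lemma phi_sup: "phi (sup a b) = phi a \<union> phi b"
  unfolding phi_def pts_def by (auto simp: prime_filter_sup_iff)

lemma phi_mono: "a \<le> b \<Longrightarrow> phi a \<subseteq> phi b"
  unfolding phi_def pts_def by (auto intro: prime_filter_upD)

lemma phi_Inf_finite: "finite T \<Longrightarrow> phi (Inf T) = pts \<inter> \<Inter>(phi ` T)"
  by (induction T rule: finite_induct) (auto simp: phi_top phi_inf phi_subset_pts)

lemma phi_Sup_finite: "finite T \<Longrightarrow> phi (Sup T) = \<Union>(phi ` T)"
  by (induction T rule: finite_induct) (auto simp: phi_bot phi_sup)

lemma Union_phi_subset_phi_Sup: "\<Union>(phi ` T) \<subseteq> phi (Sup T)"
  by (simp add: SUP_least Sup_upper phi_mono)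

lemma phi_subset_iff:
  assumes "frame_law TYPE('a::complete_lattice)"
  shows "phi (a::'a) \<subseteq> phi b \<longleftrightarrow> a \<le> b"
proof
  assume "phi a \<subseteq> phi b"
  then show "a \<le> b" using prime_filter_separation[OF assms, of a b] by (meson in_phi subsetD)
qed (rule phi_mono)

lemma topspace_XL: "topspace XL_top = pts"
  unfolding XL_top_def topology_generated_by_topspace using phi_subset_pts phi_top by blast

lemma openin_XL_phi: "openin XL_top (phi a)"
  unfolding XL_top_def by (rule topology_generated_by_Basis) auto

lemma openin_XL_Diff_phi: "openin XL_top (pts - phi a)"
  unfolding XL_top_def by (rule topology_generated_by_Basis) auto

lemma closedin_XL_phi: "closedin XL_top (phi a)"
  unfolding closedin_def topspace_XL using openin_XL_Diff_phi phi_subset_pts by blast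

lemma closedin_XL_Diff_phi: "closedin XL_top (pts - phi a)"
  unfolding closedin_def topspace_XL using openin_XL_phi phi_subset_pts
  by (metis Diff_Diff_Int Diff_subset inf.absorb2)

lemma clopenin_XL_phi_Diff_phi: "clopenin XL_top (phi c - phi d)"
proof -
  have "phi c - phi d = phi c \<inter> (pts - phi d)" using phi_subset_pts by blast
  then show ?thesis unfolding clopenin_def
    using openin_XL_phi openin_XL_Diff_phi closedin_XL_phi closedin_XL_Diff_phi
    by (metis openin_Int closedin_Int)
qed

lemma XL_basic_nbhd:
  assumes "openin XL_top U" "x \<in> U"
  shows "\<exists>c d. c \<in> x \<and> d \<notin> x \<and> phi c - phi d \<subseteq> U"
proof -
  have "generate_topology_on (range phi \<union> range (\<lambda>a. pts - phi a)) U"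
    using assms(1) unfolding XL_top_def by (simp add: openin_topology_generated_by_iff)
  then show ?thesis using assms
  proof (induction arbitrary: x rule: generate_topology_on.induct)
    case Empty
    then show ?case by simp
  next
    case (Int U V)
    obtain c1 d1 where 1: "c1 \<in> x" "d1 \<notin> x" "phi c1 - phi d1 \<subseteq> U"
      using Int.IH(1) Int.hyps(1) Int.prems unfolding XL_top_def
      by (meson IntD1 openin_topology_generated_by_iff)
    obtain c2 d2 where 2: "c2 \<in> x" "d2 \<notin> x" "phi c2 - phi d2 \<subseteq> V"
      using Int.IH(2) Int.hyps(2) Int.prems unfolding XL_top_def
      by (meson IntD2 openin_topology_generated_by_iff)
    have "prime_filter x"
      using Int.prems openin_subset[of XL_top] unfolding topspace_XL in_pts[symmetric] by blast
    then have "inf c1 c2 \<in> x" "sup d1 d2 \<notin> x"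
      using 1 2 by (auto simp: prime_filter_inf_iff prime_filter_sup_iff)
    moreover have "phi (inf c1 c2) - phi (sup d1 d2) \<subseteq> U \<inter> V"
      using 1 2 by (auto simp: phi_inf phi_sup)
    ultimately show ?case by blast
  next
    case (UN K)
    then obtain V where "V \<in> K" "x \<in> V" by blast
    then obtain c d where "c \<in> x" "d \<notin> x" "phi c - phi d \<subseteq> V"
      using UN.IH UN.hyps unfolding XL_top_def by (meson openin_topology_generated_by_iff)
    then show ?case using \<open>V \<in> K\<close> by blast
  next
    case (Basis V)
    then have "V \<subseteq> pts" using phi_subset_pts by blast
    then have "prime_filter x" using Basis.prems by (auto simp: in_pts)
    from Basis consider a where "V = phi a" | a where "V = pts - phi a" by blast
    then show ?case
    proof cases
      case 1
      then show ?thesis using Basis.prems \<open>prime_filter x\<close>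
        by (intro exI[of _ a] exI[of _ bot]) (auto simp: in_phi prime_filter_bot)
    next
      case 2
      then have "a \<notin> x" "phi top - phi a \<subseteq> V"
        using Basis.prems phi_subset_pts by (auto simp: in_phi in_pts)
      then show ?thesis using prime_filter_top[OF \<open>prime_filter x\<close>] by blast
    qed
  qed
qed

lemma compact_space_topology_generated_by:
  assumes "\<And>C. C \<subseteq> S \<Longrightarrow> \<Union>C = \<Union>S \<Longrightarrow> \<exists>C'. finite C' \<and> C' \<subseteq> C \<and> \<Union>C' = \<Union>S"
  shows "compact_space (topology_generated_by S)"
proof (rule Alexander_subbase)
  show "topology (arbitrary union_of (finite intersection_of (\<lambda>x. x \<in> S) relative_to \<Union>S))
      = topology_generated_by S"
  proof (rule topology_base_unique)
    fix V assume "(finite intersection_of (\<lambda>x. x \<in> S) relative_to \<Union>S) V"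
    then obtain F where "finite F" "F \<subseteq> S" "V = \<Union>S \<inter> \<Inter>F"
      unfolding relative_to_def intersection_of_def by auto
    moreover have "openin (topology_generated_by S) (\<Union>S)"
      using openin_topspace[of "topology_generated_by S"] by simp
    ultimately show "openin (topology_generated_by S) V"
      using openin_Int_Inter topology_generated_by_Basis by (metis subsetD)
  next
    fix U x assume U: "openin (topology_generated_by S) U" and "x \<in> U"
    have "generate_topology_on S U" using openin_topology_generated_by[OF U] .
    then obtain \<U> where "U = \<Union>\<U>" and \<U>: "\<And>T. T \<in> \<U> \<Longrightarrow> (finite' intersection_of (\<lambda>x. x \<in> S)) T"
      unfolding generate_topology_on_eq union_of_def by auto
    then obtain T where "T \<in> \<U>" "x \<in> T" "T \<subseteq> U" using \<open>x \<in> U\<close> by blast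
    then obtain F where "finite F" "F \<noteq> {}" "F \<subseteq> S" "T = \<Inter>F"
      using \<U> unfolding intersection_of_def by auto
    then have "(finite intersection_of (\<lambda>x. x \<in> S) relative_to \<Union>S) T"
      unfolding relative_to_def intersection_of_def by (intro exI[of _ "\<Inter>F"]) auto
    then show "\<exists>V. (finite intersection_of (\<lambda>x. x \<in> S) relative_to \<Union>S) V \<and> x \<in> V \<and> V \<subseteq> U"
      using \<open>x \<in> T\<close> \<open>T \<subseteq> U\<close> by blast
  qed
qed (use assms in simp)

lemma compact_space_XL:
  assumes FL: "frame_law TYPE('a::complete_lattice)"
  shows "compact_space (XL_top :: 'a set topology)"
  unfolding XL_top_def
proof (rule compact_space_topology_generated_by)
  have pts_eq: "\<Union>(range phi \<union> range (\<lambda>a. pts - phi a)) = (pts :: 'a set set)"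
    using topspace_XL unfolding XL_top_def topology_generated_by_topspace .
  fix C :: "'a set set set"
  assume C: "C \<subseteq> range phi \<union> range (\<lambda>a. pts - phi a)"
    and CU: "\<Union>C = \<Union>(range phi \<union> range (\<lambda>a. pts - phi a))"
  have "\<Union>C = pts" using CU pts_eq by (rule trans)
  define A where "A = {a. phi a \<in> C}"
  define B where "B = {b. pts - phi b \<in> C}"
  have cover: "(\<exists>a\<in>A. a \<in> x) \<or> (\<exists>b\<in>B. b \<notin> x)" if "prime_filter x" for x
  proof -
    have "x \<in> \<Union>C" using that \<open>\<Union>C = pts\<close> by (simp add: in_pts)
    then obtain V where "V \<in> C" "x \<in> V" by blast
    from \<open>V \<in> C\<close> C consider a where "V = phi a" | b where "V = pts - phi b" by blast
    then show ?thesis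
    proof cases
      case 1
      then show ?thesis using \<open>V \<in> C\<close> \<open>x \<in> V\<close> by (auto simp: A_def in_phi)
    next
      case 2
      then show ?thesis using \<open>V \<in> C\<close> \<open>x \<in> V\<close> that by (auto simp: B_def in_phi)
    qed
  qed
  then obtain A' B' where AB: "finite A'" "A' \<subseteq> A" "finite B'" "B' \<subseteq> B" "Inf B' \<le> Sup A'"
    using prime_filter_cover_finite[OF FL cover] by auto
  define C' where "C' = phi ` A' \<union> (\<lambda>b. pts - phi b) ` B'"
  have "pts \<subseteq> \<Union>C'"
  proof
    fix x :: "'a set" assume "x \<in> pts"
    then have "(\<exists>a\<in>A'. a \<in> x) \<or> (\<exists>b\<in>B'. b \<notin> x)"
      using prime_filter_Inf_le_Sup[OF AB(1,3,5)] by (simp add: in_pts)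
    then show "x \<in> \<Union>C'" using \<open>x \<in> pts\<close> by (auto simp: C'_def in_phi in_pts)
  qed
  moreover have "\<Union>C' \<subseteq> pts" using phi_subset_pts unfolding C'_def by blast
  moreover have "finite C'" using AB(1,3) by (simp add: C'_def)
  moreover have "C' \<subseteq> C" using AB(2,4) unfolding C'_def A_def B_def by blast
  ultimately show "\<exists>C'. finite C' \<and> C' \<subseteq> C \<and> \<Union>C' = \<Union>(range phi \<union> range (\<lambda>a. pts - phi a))"
    unfolding pts_eq by (intro exI[of _ C']) (simp add: subset_antisym)
qed

lemma closedin_XL_cover_phi:
  assumes FL: "frame_law TYPE('a::complete_lattice)"
    and "closedin XL_top K" "K \<subseteq> \<Union>(phi ` A)"
  shows "\<exists>T. finite T \<and> T \<subseteq> (A::'a set) \<and> K \<subseteq> phi (Sup T)"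
proof -
  have "compactin XL_top K" using assms(2) closedin_compact_space compact_space_XL[OF FL] by blast
  moreover have "\<forall>V\<in>phi ` A. openin XL_top V" using openin_XL_phi by blast
  ultimately obtain \<F> where "finite \<F>" "\<F> \<subseteq> phi ` A" "K \<subseteq> \<Union>\<F>"
    using assms(3) unfolding compactin_def by meson
  then obtain T where "T \<subseteq> A" "finite T" "\<F> = phi ` T" by (meson finite_subset_image)
  moreover from this have "K \<subseteq> phi (Sup T)"
    using \<open>K \<subseteq> \<Union>\<F>\<close> phi_Sup_finite[OF \<open>finite T\<close>] by simp
  ultimately show ?thesis by blast
qed

lemma Hausdorff_space_XL: "Hausdorff_space XL_top"
  unfolding Hausdorff_space_def topspace_XL
proof (intro allI impI)
  fix x y :: "'a::complete_lattice set" assume xy: "x \<in> pts \<and> y \<in> pts \<and> x \<noteq> y"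
  then obtain a where "a \<in> x \<and> a \<notin> y \<or> a \<in> y \<and> a \<notin> x" by blast
  then show "\<exists>U V. openin XL_top U \<and> openin XL_top V \<and> x \<in> U \<and> y \<in> V \<and> disjnt U V"
  proof
    assume "a \<in> x \<and> a \<notin> y"
    then show ?thesis using xy openin_XL_phi[of a] openin_XL_Diff_phi[of a]
      by (intro exI[of _ "phi a"] exI[of _ "pts - phi a"]) (auto simp: in_phi in_pts disjnt_def)
  next
    assume "a \<in> y \<and> a \<notin> x"
    then show ?thesis using xy openin_XL_phi[of a] openin_XL_Diff_phi[of a]
      by (intro exI[of _ "pts - phi a"] exI[of _ "phi a"]) (auto simp: in_phi in_pts disjnt_def)
  qed
qed

lemma stone_space_XL:
  assumes "frame_law TYPE('a::complete_lattice)"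
  shows "stone_space (XL_top :: 'a set topology)"
  unfolding stone_space_def
proof (intro conjI allI impI)
  fix U x assume Ux: "openin (XL_top :: 'a set topology) U \<and> x \<in> U"
  then obtain c d where cd: "c \<in> x" "d \<notin> x" "phi c - phi d \<subseteq> U" using XL_basic_nbhd by blast
  have "x \<in> pts" using Ux openin_subset topspace_XL by blast
  then have "x \<in> phi c - phi d" using cd by (simp add: in_phi in_pts)
  then show "\<exists>C. clopenin XL_top C \<and> x \<in> C \<and> C \<subseteq> U"
    using clopenin_XL_phi_Diff_phi cd(3) by blast
qed (simp_all add: compact_space_XL[OF assms] Hausdorff_space_XL)

lemma upset_XL_iff: "upset XL_top (\<subseteq>) U \<longleftrightarrow> U \<subseteq> pts \<and> (\<forall>x\<in>U. \<forall>y\<in>pts. x \<subseteq> y \<longrightarrow> y \<in> U)"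
  unfolding upset_def topspace_XL by blast

lemma phi_in_ClopUp_XL: "phi a \<in> ClopUp XL_top (\<subseteq>)"
  unfolding ClopUp_def clopenin_def upset_XL_iff
  using openin_XL_phi closedin_XL_phi phi_subset_pts by (auto simp: in_phi in_pts)

lemma priestley_space_XL:
  assumes "frame_law TYPE('a::complete_lattice)"
  shows "priestley_space (XL_top :: 'a set topology) (\<subseteq>)"
  unfolding priestley_space_def
proof (intro conjI ballI impI)
  show "partial_order_on_space (XL_top :: 'a set topology) (\<subseteq>)"
    unfolding partial_order_on_space_def by blast
  fix x y :: "'a set" assume "x \<in> topspace XL_top" "y \<in> topspace XL_top" "\<not> x \<subseteq> y"
  then obtain a where "a \<in> x" "a \<notin> y" "x \<in> pts" by (auto simp: topspace_XL)
  then show "\<exists>U\<in>ClopUp XL_top (\<subseteq>). x \<in> U \<and> y \<notin> U"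
    using phi_in_ClopUp_XL[of a] by (intro bexI[of _ "phi a"]) (auto simp: in_phi in_pts)
qed (rule stone_space_XL[OF assms])

section \<open>Clopen upsets, closures and downsets\<close>

lemma open_upset_XL_eq_Union_phi:
  assumes FL: "frame_law TYPE('a::complete_lattice)"
    and W: "openin XL_top W" "upset XL_top (\<subseteq>) W"
  shows "W = \<Union>(phi ` {a::'a. phi a \<subseteq> W})"
proof
  show "W \<subseteq> \<Union>(phi ` {a. phi a \<subseteq> W})"
  proof
    fix x assume "x \<in> W"
    have "W \<subseteq> pts" and up: "\<forall>x\<in>W. \<forall>y\<in>pts. x \<subseteq> y \<longrightarrow> y \<in> W"
      using W(2) unfolding upset_XL_iff by auto
    then have x: "prime_filter x" using \<open>x \<in> W\<close> in_pts by blast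
    have "closedin XL_top (pts - W)"
      using W(1) \<open>W \<subseteq> pts\<close> unfolding closedin_def topspace_XL by (simp add: double_diff)
    then have "compactin XL_top (pts - W)"
      using closedin_compact_space compact_space_XL[OF FL] by blast
    moreover have "\<forall>U\<in>(\<lambda>a. pts - phi a) ` x. openin XL_top U" using openin_XL_Diff_phi by blast
    moreover have "pts - W \<subseteq> \<Union>((\<lambda>a. pts - phi a) ` x)"
    proof
      fix y assume y: "y \<in> pts - W"
      then have "\<not> x \<subseteq> y" using up \<open>x \<in> W\<close> by blast
      then show "y \<in> \<Union>((\<lambda>a. pts - phi a) ` x)" using y by (auto simp: in_phi)
    qed
    ultimately obtain \<F> where \<F>: "finite \<F>" "\<F> \<subseteq> (\<lambda>a. pts - phi a) ` x" "pts - W \<subseteq> \<Union>\<F>"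
      unfolding compactin_def by meson
    then obtain T where T: "T \<subseteq> x" "finite T" "\<F> = (\<lambda>a. pts - phi a) ` T"
      by (meson finite_subset_image)
    have "phi (Inf T) \<subseteq> W"
    proof
      fix z assume "z \<in> phi (Inf T)"
      then have "z \<in> pts" "\<forall>t\<in>T. z \<in> phi t" using phi_Inf_finite[OF T(2)] by auto
      then show "z \<in> W" using \<F>(3) T(3) by blast
    qed
    moreover have "x \<in> phi (Inf T)" using prime_filter_Inf_finite[OF T(2) x T(1)] x by (simp add: in_phi)
    ultimately show "x \<in> \<Union>(phi ` {a. phi a \<subseteq> W})" by blast
  qed
qed blast

lemma closure_of_Union_phi:
  assumes FL: "frame_law TYPE('a::complete_lattice)"
  shows "XL_top closure_of (\<Union>(phi ` A)) = phi (Sup A::'a)"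
proof
  show "XL_top closure_of (\<Union>(phi ` A)) \<subseteq> phi (Sup A)"
    by (rule closure_of_minimal[OF Union_phi_subset_phi_Sup closedin_XL_phi])
next
  show "phi (Sup A) \<subseteq> XL_top closure_of (\<Union>(phi ` A))"
  proof
    fix x assume x: "x \<in> phi (Sup A)"
    then have "prime_filter x" "Sup A \<in> x" by (auto simp: in_phi)
    have "\<exists>y\<in>\<Union>(phi ` A). y \<in> U" if U: "x \<in> U" "openin XL_top U" for U
    proof -
      obtain c d where cd: "c \<in> x" "d \<notin> x" "phi c - phi d \<subseteq> U"
        using XL_basic_nbhd[OF U(2,1)] by blast
      have "\<exists>a\<in>A. \<not> inf c a \<le> d"
      proof (rule ccontr)
        assume "\<not> (\<exists>a\<in>A. \<not> inf c a \<le> d)"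
        then have "inf c (Sup A) \<le> d" by (simp add: frame_inf_Sup[OF FL] SUP_least)
        moreover have "inf c (Sup A) \<in> x"
          using \<open>prime_filter x\<close> cd \<open>Sup A \<in> x\<close> by (simp add: prime_filter_inf_iff)
        ultimately show False using \<open>prime_filter x\<close> cd(2) prime_filter_upD by blast
      qed
      then obtain a y where "a \<in> A" "prime_filter y" "inf c a \<in> y" "d \<notin> y"
        using prime_filter_separation[OF FL] by blast
      then have "y \<in> phi a" "y \<in> phi c - phi d" by (auto simp: in_phi prime_filter_inf_iff)
      then show ?thesis using \<open>a \<in> A\<close> cd(3) by blast
    qed
    moreover have "x \<in> topspace XL_top" using x phi_subset_pts topspace_XL by blast
    ultimately show "x \<in> XL_top closure_of (\<Union>(phi ` A))"
      unfolding in_closure_of by blast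
  qed
qed

lemma ClopUp_XL_eq:
  assumes FL: "frame_law TYPE('a::complete_lattice)"
  shows "ClopUp (XL_top :: 'a set topology) (\<subseteq>) = range phi"
proof
  show "ClopUp (XL_top :: 'a set topology) (\<subseteq>) \<subseteq> range phi"
  proof
    fix U :: "'a set set" assume "U \<in> ClopUp XL_top (\<subseteq>)"
    then have U: "openin XL_top U" "closedin XL_top U" "upset XL_top (\<subseteq>) U"
      unfolding ClopUp_def clopenin_def by auto
    have "U \<subseteq> \<Union>(phi ` {a. phi a \<subseteq> U})"
      using open_upset_XL_eq_Union_phi[OF FL U(1,3)] by (rule equalityD1)
    then obtain T where T: "finite T" "T \<subseteq> {a. phi a \<subseteq> U}" "U \<subseteq> phi (Sup T)"
      using closedin_XL_cover_phi[OF FL U(2)] by meson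
    have "phi (Sup T) \<subseteq> U" using T(2) phi_Sup_finite[OF T(1)] by auto
    with T(3) have "U = phi (Sup T)" by (rule subset_antisym)
    then show "U \<in> range phi" by (rule range_eqI)
  qed
qed (use phi_in_ClopUp_XL in blast)

definition himp :: "'a::complete_lattice \<Rightarrow> 'a \<Rightarrow> 'a" where
  "himp c d = Sup {e. inf e c \<le> d}"

lemma le_himpI: "inf e c \<le> d \<Longrightarrow> e \<le> himp c d"
  unfolding himp_def by (simp add: Sup_upper)

lemma inf_himp_le:
  assumes "frame_law TYPE('a::complete_lattice)"
  shows "inf (himp c d) (c::'a) \<le> d"
proof -
  have "inf c (himp c d) = (SUP e\<in>{e. inf e c \<le> d}. inf c e)"
    unfolding himp_def by (rule frame_inf_Sup[OF assms])
  also have "\<dots> \<le> d" by (auto intro!: SUP_least simp: inf_commute)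
  finally show ?thesis by (simp add: inf_commute)
qed

lemma prime_filter_extend_himp:
  assumes FL: "frame_law TYPE('a::complete_lattice)"
    and y: "prime_filter y" "himp c d \<notin> y"
  shows "\<exists>x. prime_filter x \<and> y \<subseteq> x \<and> c \<in> x \<and> (d::'a) \<notin> x"
proof -
  define F where "F = {z. \<exists>m\<in>y. inf m c \<le> z}"
  have "lattice_filter F"
    unfolding F_def by (rule lattice_filter_adjoin[OF prime_filter_imp_lattice_filter[OF y(1)]])
  moreover have "lattice_ideal {z. z \<le> d}" by (auto simp: lattice_ideal_def)
  moreover have "F \<inter> {z. z \<le> d} = {}"
  proof -
    have False if "m \<in> y" "inf m c \<le> z" "z \<le> d" for m z
    proof -
      have "m \<le> himp c d" using order_trans[OF that(2,3)] by (rule le_himpI)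
      then show False using that(1) y prime_filter_upD by blast
    qed
    then show ?thesis unfolding F_def by blast
  qed
  ultimately obtain x where x: "prime_filter x" "F \<subseteq> x" "x \<inter> {z. z \<le> d} = {}"
    using prime_filter_theorem[OF FL] by blast
  moreover have "y \<subseteq> F" "c \<in> F"
    using prime_filter_top[OF y(1)] unfolding F_def by (auto intro: le_infI1)
  ultimately show ?thesis by blast
qed

lemma downset_XL_phi_Diff_phi:
  assumes FL: "frame_law TYPE('a::complete_lattice)"
  shows "downset_of XL_top (\<subseteq>) (phi c - phi d) = pts - phi (himp c d::'a)"
proof
  show "downset_of XL_top (\<subseteq>) (phi c - phi d) \<subseteq> pts - phi (himp c d)"
  proof
    fix y assume "y \<in> downset_of XL_top (\<subseteq>) (phi c - phi d)"
    then obtain x where y: "y \<in> pts" "x \<in> phi c - phi d" "y \<subseteq> x"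
      unfolding downset_of_def topspace_XL by blast
    then have x: "prime_filter x" "c \<in> x" "d \<notin> x" by (auto simp: in_phi)
    have "himp c d \<notin> x"
    proof
      assume "himp c d \<in> x"
      then have "inf (himp c d) c \<in> x" using x by (simp add: prime_filter_inf_iff)
      then show False using x inf_himp_le[OF FL] prime_filter_upD by blast
    qed
    then show "y \<in> pts - phi (himp c d)" using y by (auto simp: in_phi)
  qed
next
  show "pts - phi (himp c d) \<subseteq> downset_of XL_top (\<subseteq>) (phi c - phi d)"
  proof
    fix y assume y: "y \<in> pts - phi (himp c d)"
    then have "prime_filter y" "himp c d \<notin> y" by (auto simp: in_phi in_pts)
    then obtain x where "prime_filter x" "y \<subseteq> x" "c \<in> x" "d \<notin> x"
      using prime_filter_extend_himp[OF FL] by blast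
    then show "y \<in> downset_of XL_top (\<subseteq>) (phi c - phi d)"
      unfolding downset_of_def topspace_XL using y by (auto simp: in_phi)
  qed
qed

lemma clopen_XL_finite_Union:
  assumes FL: "frame_law TYPE('a::complete_lattice)" and "clopenin XL_top C"
  shows "\<exists>P. finite P \<and> C = (\<Union>(c, d)\<in>P. phi c - phi (d::'a))"
proof -
  define Q where "Q = {(c, d). phi c - phi d \<subseteq> C}"
  have C: "openin XL_top C" "closedin XL_top C" using assms(2) unfolding clopenin_def by auto
  have "C \<subseteq> (\<Union>(c, d)\<in>Q. phi c - phi d)"
  proof
    fix x assume "x \<in> C"
    then obtain c d where cd: "c \<in> x" "d \<notin> x" "phi c - phi d \<subseteq> C" using XL_basic_nbhd[OF C(1)] by blast
    moreover have "x \<in> pts" using \<open>x \<in> C\<close> C(1) openin_subset topspace_XL by blast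
    ultimately show "x \<in> (\<Union>(c, d)\<in>Q. phi c - phi d)" by (auto simp: Q_def in_phi in_pts)
  qed
  moreover have "compactin XL_top C" using C(2) closedin_compact_space compact_space_XL[OF FL] by blast
  moreover have "\<forall>V\<in>(\<lambda>(c, d). phi c - phi d) ` Q. openin XL_top V"
    using clopenin_XL_phi_Diff_phi by (auto simp: clopenin_def)
  ultimately obtain \<F> where "finite \<F>" "\<F> \<subseteq> (\<lambda>(c, d). phi c - phi d) ` Q" "C \<subseteq> \<Union>\<F>"
    unfolding compactin_def by meson
  then obtain P where "P \<subseteq> Q" "finite P" "\<F> = (\<lambda>(c, d). phi c - phi d) ` P"
    by (meson finite_subset_image)
  moreover have "(\<Union>(c, d)\<in>P. phi c - phi d) \<subseteq> C" using \<open>P \<subseteq> Q\<close> unfolding Q_def by auto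
  ultimately have "C = (\<Union>(c, d)\<in>P. phi c - phi d)" using \<open>C \<subseteq> \<Union>\<F>\<close> by auto
  then show ?thesis using \<open>finite P\<close> by blast
qed

lemma downset_of_UNION: "downset_of X le (\<Union>i\<in>P. f i) = (\<Union>i\<in>P. downset_of X le (f i))"
  unfolding downset_of_def by blast

lemma clopen_downset_XL:
  assumes FL: "frame_law TYPE('a::complete_lattice)" and "clopenin (XL_top :: 'a set topology) C"
  shows "clopenin XL_top (downset_of XL_top (\<subseteq>) C)"
proof -
  obtain P where P: "finite P" "C = (\<Union>(c, d)\<in>P. phi c - phi (d::'a))"
    using clopen_XL_finite_Union[OF assms] by blast
  have "downset_of XL_top (\<subseteq>) C = (\<Union>(c, d)\<in>P. pts - phi (himp c d))"
    unfolding P(2) downset_of_UNION by (simp add: case_prod_unfold downset_XL_phi_Diff_phi[OF FL])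
  also have "\<dots> = pts - phi (Inf ((\<lambda>(c, d). himp c d) ` P))"
    using phi_Inf_finite[of "(\<lambda>(c, d). himp c d) ` P"] P(1) by (auto simp: case_prod_unfold)
  finally show ?thesis
    unfolding clopenin_def using openin_XL_Diff_phi closedin_XL_Diff_phi by metis
qed

lemma L_space_XL:
  assumes FL: "frame_law TYPE('a::complete_lattice)"
  shows "L_space (XL_top :: 'a set topology) (\<subseteq>)"
  unfolding L_space_def
proof (intro conjI allI impI)
  fix U :: "'a set set" assume "openin XL_top U \<and> upset XL_top (\<subseteq>) U"
  then have "XL_top closure_of U = phi (Sup {a. phi a \<subseteq> U})"
    using open_upset_XL_eq_Union_phi[OF FL] closure_of_Union_phi[OF FL] by metis
  then show "openin XL_top (XL_top closure_of U)" using openin_XL_phi by metis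
qed (simp_all add: priestley_space_XL[OF FL] clopen_downset_XL[OF FL])

section \<open>The spatial part and Scott upsets\<close>

definition completely_prime :: "'a::complete_lattice set \<Rightarrow> bool" where
  "completely_prime y \<longleftrightarrow> prime_filter y \<and> (\<forall>S. Sup S \<in> y \<longrightarrow> (\<exists>s\<in>S. s \<in> y))"

definition cpts :: "'a::complete_lattice set set" where
  "cpts = {y. completely_prime y}"

lemma cpts_subset_pts: "cpts \<subseteq> pts"
  unfolding cpts_def completely_prime_def pts_def by blast

lemma downset_XL_point: "downset_of XL_top (\<subseteq>) {y} = {z \<in> pts. z \<subseteq> y}"
  unfolding downset_of_def topspace_XL by blast

lemma downset_XL_completely_prime:
  assumes "completely_prime (y::'a::complete_lattice set)"
  shows "downset_of XL_top (\<subseteq>) {y} = pts - phi (Sup {b. b \<notin> y})"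
proof -
  have y: "prime_filter y" "Sup {b. b \<notin> y} \<notin> y"
    using assms unfolding completely_prime_def by blast+
  have below: "z \<subseteq> y" if "prime_filter z" "Sup {b. b \<notin> y} \<notin> z" for z
    using that prime_filter_upD Sup_upper by (metis mem_Collect_eq subsetI)
  show ?thesis unfolding downset_XL_point
  proof (intro equalityI subsetI)
    fix z assume "z \<in> {z \<in> pts. z \<subseteq> y}"
    then show "z \<in> pts - phi (Sup {b. b \<notin> y})" using y(2) by (auto simp: in_phi)
  next
    fix z assume "z \<in> pts - phi (Sup {b. b \<notin> y})"
    then have "prime_filter z" "Sup {b. b \<notin> y} \<notin> z" by (auto simp: in_phi in_pts)
    then show "z \<in> {z \<in> pts. z \<subseteq> y}" using below by (simp add: in_pts)
  qed
qed

lemma completely_prime_if_open_downset_XL: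
  assumes FL: "frame_law TYPE('a::complete_lattice)"
    and "prime_filter (y::'a set)" "openin XL_top (downset_of XL_top (\<subseteq>) {y})"
  shows "completely_prime y"
proof -
  have "y \<in> downset_of XL_top (\<subseteq>) {y}" using assms(2) by (simp add: downset_XL_point in_pts)
  then obtain c d where cd: "c \<in> y" "d \<notin> y" "phi c - phi d \<subseteq> downset_of XL_top (\<subseteq>) {y}"
    using XL_basic_nbhd[OF assms(3)] by blast
  have "\<exists>s\<in>S. s \<in> y" if S: "Sup S \<in> y" for S
  proof (rule ccontr)
    assume none: "\<not> (\<exists>s\<in>S. s \<in> y)"
    have "inf c s \<le> d" if "s \<in> S" for s
    proof (rule ccontr)
      assume "\<not> inf c s \<le> d"
      then obtain z where z: "prime_filter z" "inf c s \<in> z" "d \<notin> z"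
        using prime_filter_separation[OF FL] by blast
      then have "z \<subseteq> y" using cd(3) by (auto simp: downset_XL_point in_phi prime_filter_inf_iff)
      then show False using z none that by (auto simp: prime_filter_inf_iff)
    qed
    then have "inf c (Sup S) \<le> d" by (simp add: frame_inf_Sup[OF FL] SUP_least)
    moreover have "inf c (Sup S) \<in> y"
      using assms(2) cd(1) S by (simp add: prime_filter_inf_iff)
    ultimately show False using assms(2) cd(2) prime_filter_upD by blast
  qed
  then show ?thesis using assms(2) by (simp add: completely_prime_def)
qed

lemma spatial_part_XL:
  assumes FL: "frame_law TYPE('a::complete_lattice)"
  shows "spatial_part (XL_top :: 'a set topology) (\<subseteq>) = cpts"
proof (intro set_eqI iffI)
  fix y :: "'a set" assume "y \<in> cpts"
  then have "completely_prime y" by (simp add: cpts_def)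
  then have "clopenin XL_top (downset_of XL_top (\<subseteq>) {y})"
    unfolding clopenin_def downset_XL_completely_prime[OF \<open>completely_prime y\<close>]
    using openin_XL_Diff_phi closedin_XL_Diff_phi by blast
  then show "y \<in> spatial_part XL_top (\<subseteq>)"
    using \<open>completely_prime y\<close> by (simp add: spatial_part_def topspace_XL in_pts completely_prime_def)
next
  fix y :: "'a set" assume "y \<in> spatial_part XL_top (\<subseteq>)"
  then have "prime_filter y" "openin XL_top (downset_of XL_top (\<subseteq>) {y})"
    unfolding spatial_part_def clopenin_def by (auto simp: topspace_XL in_pts)
  then show "y \<in> cpts"
    using completely_prime_if_open_downset_XL[OF FL] by (simp add: cpts_def)
qed

lemma lattice_ideal_sup_complement:
  assumes "prime_filter x"
  shows "lattice_ideal {c. \<exists>d. d \<notin> x \<and> c \<le> sup d e}"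
  unfolding lattice_ideal_def
proof (intro conjI allI impI)
  show "bot \<in> {c. \<exists>d. d \<notin> x \<and> c \<le> sup d e}" using prime_filter_bot[OF assms] by auto
next
  fix a b assume "b \<in> {c. \<exists>d. d \<notin> x \<and> c \<le> sup d e} \<and> a \<le> b"
  then show "a \<in> {c. \<exists>d. d \<notin> x \<and> c \<le> sup d e}" using order_trans by blast
next
  fix a b assume "a \<in> {c. \<exists>d. d \<notin> x \<and> c \<le> sup d e} \<and> b \<in> {c. \<exists>d. d \<notin> x \<and> c \<le> sup d e}"
  then obtain d1 d2 where d: "d1 \<notin> x" "a \<le> sup d1 e" "d2 \<notin> x" "b \<le> sup d2 e" by blast
  then have "sup d1 d2 \<notin> x" using assms by (simp add: prime_filter_sup_iff)
  moreover have "sup a b \<le> sup (sup d1 d2) e"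
  proof -
    have "sup d1 e \<le> sup (sup d1 d2) e" "sup d2 e \<le> sup (sup d1 d2) e"
      by (intro sup_mono; simp)+
    then show ?thesis using d(2,4) by (meson le_sup_iff order_trans)
  qed
  ultimately show "sup a b \<in> {c. \<exists>d. d \<notin> x \<and> c \<le> sup d e}" by blast
qed

(* If Sup S \<in> x but S \<inter> x = {}, compactness of k separates the filter above k from the ideal
   generated by Sup S and the complement of x. The separating prime filter lies in phi k below x,
   so it is x by minimality, which contradicts Sup S \<in> x. *)
lemma minimal_phi_completely_prime:
  assumes FL: "frame_law TYPE('a::complete_lattice)"
    and k: "compact_el (k::'a)" and x: "x \<in> minimal_of (\<subseteq>) (phi k)"
  shows "completely_prime x"
proof -
  have "prime_filter x" "k \<in> x" and min: "\<And>y. y \<in> phi k \<Longrightarrow> y \<subseteq> x \<Longrightarrow> y = x"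
    using x unfolding minimal_of_def by (auto simp: in_phi)
  have "\<exists>s\<in>S. s \<in> x" if "Sup S \<in> x" for S
  proof (rule ccontr)
    assume none: "\<not> (\<exists>s\<in>S. s \<in> x)"
    define I where "I = {c. \<exists>d. d \<notin> x \<and> c \<le> sup d (Sup S)}"
    have "lattice_ideal I" unfolding I_def by (rule lattice_ideal_sup_complement[OF \<open>prime_filter x\<close>])
    moreover have "lattice_filter {c. k \<le> c}"
      by (auto simp: lattice_filter_def intro: order_trans)
    moreover have "{c. k \<le> c} \<inter> I = {}"
    proof -
      have False if "d \<notin> x" "k \<le> sup d (Sup S)" for d
      proof -
        have "k \<le> Sup (insert d S)" using that(2) by simp
        then obtain T where T: "finite T" "T \<subseteq> insert d S" "k \<le> Sup T"
          using k unfolding compact_el_def way_below_def by blast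
        then have "Sup T \<in> x" using \<open>k \<in> x\<close> \<open>prime_filter x\<close> prime_filter_upD by blast
        then obtain t where "t \<in> T" "t \<in> x" using prime_filter_Sup_finite[OF T(1) \<open>prime_filter x\<close>] by blast
        then show False using T(2) that(1) none by blast
      qed
      then show ?thesis unfolding I_def using order_trans by blast
    qed
    ultimately obtain y where y: "prime_filter y" "{c. k \<le> c} \<subseteq> y" "y \<inter> I = {}"
      using prime_filter_theorem[OF FL] by blast
    have "y \<subseteq> x"
    proof
      fix b assume "b \<in> y"
      have "b \<notin> x \<Longrightarrow> b \<in> I" unfolding I_def by auto
      then show "b \<in> x" using \<open>b \<in> y\<close> y(3) by blast
    qed
    moreover have "y \<in> phi k" using y by (auto simp: in_phi)
    ultimately have "y = x" by (rule min[rotated])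
    moreover have "Sup S \<in> I"
      unfolding I_def using prime_filter_bot[OF \<open>prime_filter x\<close>] by (intro CollectI exI[of _ bot]) simp
    ultimately show False using y(3) \<open>Sup S \<in> x\<close> by blast
  qed
  then show ?thesis using \<open>prime_filter x\<close> unfolding completely_prime_def by blast
qed

lemma subset_Zorn_minimal:
  assumes "A \<noteq> {}"
    and chain: "\<And>C. C \<noteq> {} \<Longrightarrow> C \<subseteq> A \<Longrightarrow> \<forall>X\<in>C. \<forall>Y\<in>C. X \<subseteq> Y \<or> Y \<subseteq> X \<Longrightarrow> \<Inter>C \<in> A"
  shows "\<exists>M\<in>A. \<forall>X\<in>A. X \<subseteq> M \<longrightarrow> X = M"
proof -
  have "\<exists>N\<in>uminus ` A. \<forall>X\<in>uminus ` A. N \<subseteq> X \<longrightarrow> X = N"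
  proof (rule subset_Zorn_nonempty)
    fix C assume C: "C \<noteq> {}" "subset.chain (uminus ` A) C"
    then have CA: "C \<subseteq> uminus ` A" and ch: "\<forall>X\<in>C. \<forall>Y\<in>C. X \<subseteq> Y \<or> Y \<subseteq> X"
      unfolding subset_chain_def by blast+
    have "\<Inter>(uminus ` C) \<in> A"
    proof (rule chain)
      show "uminus ` C \<noteq> {}" using C(1) by blast
      show "uminus ` C \<subseteq> A" using CA by auto
      show "\<forall>X\<in>uminus ` C. \<forall>Y\<in>uminus ` C. X \<subseteq> Y \<or> Y \<subseteq> X" using ch by blast
    qed
    moreover have "\<Union>C = - \<Inter>(uminus ` C)" by auto
    ultimately show "\<Union>C \<in> uminus ` A" by (metis image_eqI)
  qed (use assms(1) in blast)
  then obtain M where "M \<in> A" and max: "\<forall>X\<in>uminus ` A. - M \<subseteq> X \<longrightarrow> X = - M" by blast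
  then show ?thesis by auto
qed

lemma minimal_phi_below:
  assumes "prime_filter x" "k \<in> x"
  shows "\<exists>z\<in>minimal_of (\<subseteq>) (phi k). z \<subseteq> x"
proof -
  define A where "A = {z. prime_filter z \<and> k \<in> z \<and> z \<subseteq> x}"
  have "\<exists>z\<in>A. \<forall>y\<in>A. y \<subseteq> z \<longrightarrow> y = z"
  proof (rule subset_Zorn_minimal)
    show "A \<noteq> {}" using assms by (auto simp: A_def)
    fix C assume C: "C \<noteq> {}" "C \<subseteq> A" "\<forall>y\<in>C. \<forall>z\<in>C. y \<subseteq> z \<or> z \<subseteq> y"
    then have "prime_filter (\<Inter>C)" by (intro prime_filter_Inter_chain) (auto simp: A_def)
    moreover have "k \<in> \<Inter>C" "\<Inter>C \<subseteq> x" using C unfolding A_def by blast+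
    ultimately show "\<Inter>C \<in> A" by (simp add: A_def)
  qed
  then obtain z where "z \<in> A" and min: "\<forall>y\<in>A. y \<subseteq> z \<longrightarrow> y = z" by blast
  have "z \<in> minimal_of (\<subseteq>) (phi k)"
    unfolding minimal_of_def
  proof (intro CollectI conjI ballI impI)
    show "z \<in> phi k" using \<open>z \<in> A\<close> by (simp add: A_def in_phi)
    fix y assume "y \<in> phi k" "y \<subseteq> z"
    then have "y \<in> A" using \<open>z \<in> A\<close> by (auto simp: A_def in_phi)
    then show "y = z" using min \<open>y \<subseteq> z\<close> by blast
  qed
  then show ?thesis using \<open>z \<in> A\<close> by (auto simp: A_def)
qed

lemma phi_compact_in_ClopSUp_XL:
  assumes FL: "frame_law TYPE('a::complete_lattice)" and "compact_el (k::'a)"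
  shows "phi k \<in> ClopSUp XL_top (\<subseteq>)"
proof -
  have "minimal_of (\<subseteq>) (phi k) \<subseteq> spatial_part XL_top (\<subseteq>)"
    using minimal_phi_completely_prime[OF assms] unfolding spatial_part_XL[OF FL] cpts_def by blast
  then show ?thesis
    using phi_in_ClopUp_XL[of k] unfolding ClopSUp_def ClopUp_def scott_upset_def clopenin_def by blast
qed

lemma core_dense_XL:
  assumes AL: "algebraic_frame TYPE('a::complete_lattice)"
    and U: "U \<in> ClopUp (XL_top :: 'a set topology) (\<subseteq>)"
  shows "U \<subseteq> XL_top closure_of (core_sp XL_top (\<subseteq>) U)"
proof -
  note FL = algebraic_frame_law[OF AL]
  obtain a where a: "U = phi a" using U ClopUp_XL_eq[OF FL] by blast
  define K where "K = {k::'a. compact_el k \<and> k \<le> a}"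
  have "\<Union>(phi ` K) \<subseteq> core_sp XL_top (\<subseteq>) U"
    unfolding core_sp_def a K_def using phi_compact_in_ClopSUp_XL[OF FL] phi_mono by blast
  then have "XL_top closure_of \<Union>(phi ` K) \<subseteq> XL_top closure_of (core_sp XL_top (\<subseteq>) U)"
    by (rule closure_of_mono)
  moreover have "XL_top closure_of \<Union>(phi ` K) = U"
    unfolding closure_of_Union_phi[OF FL] K_def a
    using algebraic_frame_Sup_compact[OF AL, of a] by simp
  ultimately show ?thesis by simp
qed

section \<open>The way-below relation and coherent L-spaces\<close>

lemma le_way_below_trans: "b' \<le> b \<Longrightarrow> way_below b a \<Longrightarrow> way_below b' a"
  unfolding way_below_def by (meson order_trans)

lemma way_below_le_trans: "way_below b a \<Longrightarrow> a \<le> a' \<Longrightarrow> way_below b a'"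
  unfolding way_below_def by (meson order_trans)

lemma way_below_Sup_finite:
  "finite T \<Longrightarrow> \<forall>t\<in>T. way_below t a \<Longrightarrow> way_below (Sup T) (a::'a::complete_lattice)"
proof (induction T rule: finite_induct)
  case empty
  show ?case unfolding way_below_def by (intro allI impI exI[of _ "{}"]) simp
next
  case (insert t T)
  show ?case unfolding way_below_def
  proof (intro allI impI)
    fix S assume "a \<le> Sup S"
    then obtain T1 T2 where "finite T1" "T1 \<subseteq> S" "t \<le> Sup T1" "finite T2" "T2 \<subseteq> S" "Sup T \<le> Sup T2"
      using insert unfolding way_below_def by (meson insertCI)
    then have "finite (T1 \<union> T2) \<and> T1 \<union> T2 \<subseteq> S \<and> Sup (insert t T) \<le> Sup (T1 \<union> T2)"
      by (auto simp: Sup_union_distrib intro: le_supI1 le_supI2 sup_mono)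
    then show "\<exists>T'. finite T' \<and> T' \<subseteq> S \<and> Sup (insert t T) \<le> Sup T'" by blast
  qed
qed

lemma way_below_compact_between:
  assumes AL: "algebraic_frame TYPE('a::complete_lattice)" and "way_below (a::'a) b"
  shows "\<exists>k. compact_el k \<and> a \<le> k \<and> k \<le> b"
proof -
  have "b \<le> Sup {k. compact_el k \<and> k \<le> b}" using algebraic_frame_Sup_compact[OF AL, of b] by simp
  then obtain T where T: "finite T" "T \<subseteq> {k. compact_el k \<and> k \<le> b}" "a \<le> Sup T"
    using assms(2) unfolding way_below_def by blast
  have "\<forall>t\<in>T. way_below t (Sup T)"
    using T(2) unfolding compact_el_def by (blast intro: way_below_le_trans Sup_upper)
  then have "compact_el (Sup T)" unfolding compact_el_def by (rule way_below_Sup_finite[OF T(1)])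
  moreover have "Sup T \<le> b" using T(2) by (auto intro: Sup_least)
  ultimately show ?thesis using T(3) by blast
qed

lemma way_below_sp_XL_phi_iff:
  assumes FL: "frame_law TYPE('a::complete_lattice)"
  shows "way_below_sp XL_top (\<subseteq>) (phi b) (phi a) \<longleftrightarrow> way_below b (a::'a)"
proof
  assume wb: "way_below_sp XL_top (\<subseteq>) (phi b) (phi a)"
  show "way_below b a" unfolding way_below_def
  proof (intro allI impI)
    fix S assume "a \<le> Sup S"
    have "openin XL_top (\<Union>(phi ` S))" using openin_XL_phi by blast
    moreover have "upset XL_top (\<subseteq>) (\<Union>(phi ` S))"
      unfolding upset_XL_iff using phi_subset_pts by (auto simp: in_phi in_pts)
    moreover have "phi a \<subseteq> XL_top closure_of (\<Union>(phi ` S))"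
      unfolding closure_of_Union_phi[OF FL] using \<open>a \<le> Sup S\<close> by (rule phi_mono)
    ultimately have "phi b \<subseteq> \<Union>(phi ` S)" using wb unfolding way_below_sp_def by blast
    then obtain T where "finite T" "T \<subseteq> S" "phi b \<subseteq> phi (Sup T)"
      using closedin_XL_cover_phi[OF FL closedin_XL_phi] by meson
    moreover from this(3) have "b \<le> Sup T" by (simp add: phi_subset_iff[OF FL])
    ultimately show "\<exists>T. finite T \<and> T \<subseteq> S \<and> b \<le> Sup T" by blast
  qed
next
  assume wb: "way_below b a"
  show "way_below_sp XL_top (\<subseteq>) (phi b) (phi a)" unfolding way_below_sp_def
  proof (intro allI impI)
    fix W assume W: "openin XL_top W \<and> upset XL_top (\<subseteq>) W \<and> phi a \<subseteq> XL_top closure_of W"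
    define A where "A = {c. phi c \<subseteq> W}"
    have "W = \<Union>(phi ` A)" unfolding A_def
      using W by (intro open_upset_XL_eq_Union_phi[OF FL]) auto
    then have "phi a \<subseteq> phi (Sup A)" using W by (simp add: closure_of_Union_phi[OF FL])
    then have "a \<le> Sup A" by (simp add: phi_subset_iff[OF FL])
    then obtain T where T: "finite T" "T \<subseteq> A" "b \<le> Sup T"
      using wb unfolding way_below_def by blast
    then have "phi b \<subseteq> \<Union>(phi ` T)" using phi_mono[OF T(3)] phi_Sup_finite[OF T(1)] by simp
    then show "phi b \<subseteq> W" using T(2) unfolding A_def by blast
  qed
qed

lemma ker_sp_XL_phi:
  assumes FL: "frame_law TYPE('a::complete_lattice)"
  shows "ker_sp XL_top (\<subseteq>) (phi a) = \<Union>(phi ` {b. way_below b (a::'a)})"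
proof -
  have "{V \<in> range phi. way_below_sp XL_top (\<subseteq>) V (phi a)} = phi ` {b. way_below b a}"
    using way_below_sp_XL_phi_iff[OF FL] by auto
  then show ?thesis unfolding ker_sp_def ClopUp_XL_eq[OF FL] by simp
qed

lemma phi_subset_ker_sp_XL_iff:
  assumes FL: "frame_law TYPE('a::complete_lattice)"
  shows "phi c \<subseteq> ker_sp XL_top (\<subseteq>) (phi a) \<longleftrightarrow> way_below c (a::'a)"
proof
  assume "phi c \<subseteq> ker_sp XL_top (\<subseteq>) (phi a)"
  then obtain T where T: "finite T" "T \<subseteq> {b. way_below b a}" "phi c \<subseteq> phi (Sup T)"
    unfolding ker_sp_XL_phi[OF FL] using closedin_XL_cover_phi[OF FL closedin_XL_phi] by meson
  have "c \<le> Sup T" using T(3) by (simp add: phi_subset_iff[OF FL])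
  moreover have "way_below (Sup T) a" using T(2) by (intro way_below_Sup_finite[OF T(1)]) blast
  ultimately show "way_below c a" by (rule le_way_below_trans)
qed (auto simp: ker_sp_XL_phi[OF FL])

lemma ker_sp_XL_Int_iff:
  assumes FL: "frame_law TYPE('a::complete_lattice)"
  shows "(\<forall>U\<in>ClopUp (XL_top :: 'a set topology) (\<subseteq>). \<forall>V\<in>ClopUp XL_top (\<subseteq>).
            ker_sp XL_top (\<subseteq>) (U \<inter> V) = ker_sp XL_top (\<subseteq>) U \<inter> ker_sp XL_top (\<subseteq>) V)
    \<longleftrightarrow> (\<forall>a b c::'a. way_below a b \<and> way_below a c \<longrightarrow> way_below a (inf b c))"
proof -
  have "ker_sp XL_top (\<subseteq>) (phi (inf b c)) = ker_sp XL_top (\<subseteq>) (phi b) \<inter> ker_sp XL_top (\<subseteq>) (phi c)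
    \<longleftrightarrow> (\<forall>a::'a. way_below a b \<and> way_below a c \<longrightarrow> way_below a (inf b c))" for b c :: 'a
  proof
    assume eq: "ker_sp XL_top (\<subseteq>) (phi (inf b c)) = ker_sp XL_top (\<subseteq>) (phi b) \<inter> ker_sp XL_top (\<subseteq>) (phi c)"
    show "\<forall>a. way_below a b \<and> way_below a c \<longrightarrow> way_below a (inf b c)"
      by (simp add: phi_subset_ker_sp_XL_iff[OF FL, symmetric] eq)
  next
    assume stable: "\<forall>a. way_below a b \<and> way_below a c \<longrightarrow> way_below a (inf b c)"
    show "ker_sp XL_top (\<subseteq>) (phi (inf b c)) = ker_sp XL_top (\<subseteq>) (phi b) \<inter> ker_sp XL_top (\<subseteq>) (phi c)"
    proof (intro equalityI subsetI)
      fix x assume "x \<in> ker_sp XL_top (\<subseteq>) (phi b) \<inter> ker_sp XL_top (\<subseteq>) (phi c)"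
      then obtain a1 a2 where a: "way_below a1 b" "x \<in> phi a1" "way_below a2 c" "x \<in> phi a2"
        unfolding ker_sp_XL_phi[OF FL] by blast
      have "way_below (inf a1 a2) b" "way_below (inf a1 a2) c"
        using le_way_below_trans[OF inf_le1 a(1)] le_way_below_trans[OF inf_le2 a(3)] .
      then have "way_below (inf a1 a2) (inf b c)" using stable by blast
      moreover have "x \<in> phi (inf a1 a2)" using a(2,4) by (simp add: phi_inf)
      ultimately show "x \<in> ker_sp XL_top (\<subseteq>) (phi (inf b c))"
        unfolding ker_sp_XL_phi[OF FL] by blast
    next
      fix x assume "x \<in> ker_sp XL_top (\<subseteq>) (phi (inf b c))"
      then obtain a where "way_below a (inf b c)" "x \<in> phi a"
        unfolding ker_sp_XL_phi[OF FL] by blast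
      moreover have "way_below a b" "way_below a c"
        using way_below_le_trans[OF \<open>way_below a (inf b c)\<close>] by simp_all
      ultimately show "x \<in> ker_sp XL_top (\<subseteq>) (phi b) \<inter> ker_sp XL_top (\<subseteq>) (phi c)"
        unfolding ker_sp_XL_phi[OF FL] by blast
    qed
  qed
  then show ?thesis unfolding ClopUp_XL_eq[OF FL] by (simp add: phi_inf[symmetric]) blast
qed

lemma ker_sp_XL_topspace_iff:
  assumes FL: "frame_law TYPE('a::complete_lattice)"
  shows "topspace (XL_top :: 'a set topology) = ker_sp XL_top (\<subseteq>) (topspace XL_top)
    \<longleftrightarrow> compact_el (top::'a)"
proof -
  have "ker_sp XL_top (\<subseteq>) (phi top) = \<Union>(phi ` {b. way_below b (top::'a)})"
    by (rule ker_sp_XL_phi[OF FL])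
  also have "\<dots> \<subseteq> phi top" unfolding phi_top using phi_subset_pts by blast
  finally show ?thesis
    unfolding topspace_XL phi_top[symmetric] compact_el_def phi_subset_ker_sp_XL_iff[OF FL, symmetric]
    by blast
qed

lemma coherent_frame_iff_coherent_L_space_XL:
  assumes AL: "algebraic_frame TYPE('a::complete_lattice)"
  shows "coherent_frame TYPE('a) \<longleftrightarrow> coherent_L_space (XL_top :: 'a set topology) (\<subseteq>)"
proof -
  note FL = algebraic_frame_law[OF AL]
  have "L_space (XL_top :: 'a set topology) (\<subseteq>)" by (rule L_space_XL[OF FL])
  moreover have "\<forall>U\<in>ClopUp (XL_top :: 'a set topology) (\<subseteq>). U \<subseteq> XL_top closure_of core_sp XL_top (\<subseteq>) U"
    using core_dense_XL[OF AL] by blast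
  ultimately show ?thesis
    unfolding coherent_frame_def arithmetic_frame_def coherent_L_space_def
      ker_sp_XL_Int_iff[OF FL] ker_sp_XL_topspace_iff[OF FL]
    using AL by blast
qed

section \<open>The spatial part as a spectral space\<close>

abbreviation YL :: "'a::complete_lattice set topology" where
  "YL \<equiv> spatial_top XL_top (\<subseteq>)"

lemma UN_phi_Int_cpts: "(\<Union>a\<in>A. phi a \<inter> cpts) = phi (Sup A) \<inter> cpts"
proof (intro equalityI subsetI)
  fix y assume y: "y \<in> phi (Sup A) \<inter> cpts"
  then obtain a where "a \<in> A" "a \<in> y" by (auto simp: in_phi cpts_def completely_prime_def)
  then show "y \<in> (\<Union>a\<in>A. phi a \<inter> cpts)" using y by (auto simp: in_phi)
qed (use phi_mono[OF Sup_upper] in blast)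

lemma openin_topology_generated_by_istopology:
  assumes "istopology (\<lambda>U. U \<in> S)"
  shows "openin (topology_generated_by S) U \<longleftrightarrow> U \<in> S"
proof
  assume "openin (topology_generated_by S) U"
  then have "generate_topology_on S U" by (rule openin_topology_generated_by)
  then show "U \<in> S" using generate_topology_on_coarsest[of "\<lambda>U. U \<in> S" S U] assms by blast
qed (rule topology_generated_by_Basis)

lemma openin_YL_iff:
  assumes FL: "frame_law TYPE('a::complete_lattice)"
  shows "openin YL U \<longleftrightarrow> (\<exists>a::'a. U = phi a \<inter> cpts)"
proof -
  have YL: "YL = topology_generated_by (range (\<lambda>a::'a. phi a \<inter> cpts))"
    unfolding spatial_top_def spatial_part_XL[OF FL] ClopUp_XL_eq[OF FL] image_image ..
  have "istopology (\<lambda>U. U \<in> range (\<lambda>a::'a. phi a \<inter> cpts))"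
    unfolding istopology_def
  proof (intro conjI allI impI)
    fix U V :: "'a set set" assume "U \<in> range (\<lambda>a. phi a \<inter> cpts)" "V \<in> range (\<lambda>a. phi a \<inter> cpts)"
    then obtain a b where "U = phi a \<inter> cpts" "V = phi b \<inter> cpts" by blast
    then have "U \<inter> V = phi (inf a b) \<inter> cpts" by (auto simp: phi_inf)
    then show "U \<inter> V \<in> range (\<lambda>a. phi a \<inter> cpts)" by blast
  next
    fix K :: "'a set set set" assume K: "\<forall>U\<in>K. U \<in> range (\<lambda>a. phi a \<inter> cpts)"
    have "\<Union>K = (\<Union>a\<in>{a. phi a \<inter> cpts \<in> K}. phi a \<inter> cpts)"
    proof (intro equalityI subsetI)
      fix x assume "x \<in> \<Union>K"
      then obtain U where "U \<in> K" "x \<in> U" by blast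
      moreover obtain a where "U = phi a \<inter> cpts" using K \<open>U \<in> K\<close> by blast
      ultimately show "x \<in> (\<Union>a\<in>{a. phi a \<inter> cpts \<in> K}. phi a \<inter> cpts)" by blast
    qed blast
    then show "\<Union>K \<in> range (\<lambda>a. phi a \<inter> cpts)" unfolding UN_phi_Int_cpts by (rule range_eqI)
  qed
  then show ?thesis unfolding YL by (simp add: openin_topology_generated_by_istopology) blast
qed

lemma topspace_YL:
  assumes FL: "frame_law TYPE('a::complete_lattice)"
  shows "topspace (YL :: 'a set topology) = cpts"
proof -
  have "topspace (YL :: 'a set topology) = (\<Union>a\<in>UNIV. phi (a::'a) \<inter> cpts)"
    unfolding topspace_def openin_YL_iff[OF FL] by (simp add: full_SetCompr_eq)
  also have "\<dots> = pts \<inter> cpts" unfolding UN_phi_Int_cpts by (simp add: phi_top)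
  also have "\<dots> = cpts" using cpts_subset_pts by blast
  finally show ?thesis .
qed

lemma closedin_YL_iff:
  assumes FL: "frame_law TYPE('a::complete_lattice)"
  shows "closedin YL C \<longleftrightarrow> (\<exists>a::'a. C = cpts - phi a)"
proof
  assume "closedin YL C"
  then obtain a :: 'a where "C \<subseteq> cpts" "cpts - C = phi a \<inter> cpts"
    unfolding closedin_def topspace_YL[OF FL] openin_YL_iff[OF FL] by blast
  then have "C = cpts - phi a" by blast
  then show "\<exists>a. C = cpts - phi a" ..
next
  assume "\<exists>a::'a. C = cpts - phi a"
  then obtain a :: 'a where "C = cpts - phi a" ..
  moreover have "cpts - (cpts - phi a) = phi a \<inter> cpts" by blast
  ultimately show "closedin YL C"
    unfolding closedin_def topspace_YL[OF FL] openin_YL_iff[OF FL] by auto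
qed

lemma phi_Int_cpts_subset_iff:
  assumes AL: "algebraic_frame TYPE('a::complete_lattice)"
  shows "phi (a::'a) \<inter> cpts \<subseteq> phi b \<inter> cpts \<longleftrightarrow> a \<le> b"
proof
  assume sub: "phi a \<inter> cpts \<subseteq> phi b \<inter> cpts"
  note FL = algebraic_frame_law[OF AL]
  show "a \<le> b"
  proof (rule ccontr)
    assume "\<not> a \<le> b"
    then have "\<not> Sup {k. compact_el k \<and> k \<le> a} \<le> b"
      using algebraic_frame_Sup_compact[OF AL, of a] by simp
    then obtain k where k: "compact_el k" "k \<le> a" "\<not> k \<le> b" by (auto intro: Sup_least)
    obtain x where x: "prime_filter x" "k \<in> x" "b \<notin> x" using prime_filter_separation[OF FL k(3)] by blast
    obtain z where z: "z \<in> minimal_of (\<subseteq>) (phi k)" "z \<subseteq> x" using minimal_phi_below[OF x(1,2)] by blast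
    have "completely_prime z" by (rule minimal_phi_completely_prime[OF FL k(1) z(1)])
    moreover have "a \<in> z"
      using z(1) k(2) unfolding minimal_of_def by (auto simp: in_phi intro: prime_filter_upD)
    ultimately have "z \<in> phi a \<inter> cpts" by (simp add: in_phi cpts_def completely_prime_def)
    moreover have "z \<notin> phi b" using z(2) x(3) by (auto simp: in_phi)
    ultimately show False using sub by blast
  qed
qed (use phi_mono in blast)

lemma compactin_YL_iff:
  assumes AL: "algebraic_frame TYPE('a::complete_lattice)"
  shows "compactin YL (phi (a::'a) \<inter> cpts) \<longleftrightarrow> compact_el a"
proof -
  note FL = algebraic_frame_law[OF AL]
  have cover: "phi a \<inter> cpts \<subseteq> (\<Union>c\<in>A. phi c \<inter> cpts) \<longleftrightarrow> a \<le> Sup A" for A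
    unfolding UN_phi_Int_cpts by (rule phi_Int_cpts_subset_iff[OF AL])
  show ?thesis
  proof
    assume cpt: "compactin YL (phi a \<inter> cpts)"
    show "compact_el a" unfolding compact_el_def way_below_def
    proof (intro allI impI)
      fix S assume "a \<le> Sup S"
      then have "phi a \<inter> cpts \<subseteq> \<Union>((\<lambda>c. phi c \<inter> cpts) ` S)" using cover[of S] by simp
      moreover have "\<forall>U\<in>(\<lambda>c. phi c \<inter> cpts) ` S. openin YL U" using openin_YL_iff[OF FL] by blast
      ultimately obtain \<F> where \<F>: "finite \<F>" "\<F> \<subseteq> (\<lambda>c. phi c \<inter> cpts) ` S" "phi a \<inter> cpts \<subseteq> \<Union>\<F>"
        using cpt unfolding compactin_def by meson
      then obtain T where T: "T \<subseteq> S" "finite T" "\<F> = (\<lambda>c. phi c \<inter> cpts) ` T"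
        by (meson finite_subset_image)
      have "phi a \<inter> cpts \<subseteq> (\<Union>c\<in>T. phi c \<inter> cpts)" using \<F>(3) T(3) by simp
      then have "a \<le> Sup T" using cover[of T] by simp
      then show "\<exists>T. finite T \<and> T \<subseteq> S \<and> a \<le> Sup T" using T(1,2) by blast
    qed
  next
    assume "compact_el a"
    show "compactin YL (phi a \<inter> cpts)"
      unfolding compactin_def
    proof (intro conjI allI impI)
      show "phi a \<inter> cpts \<subseteq> topspace YL" unfolding topspace_YL[OF FL] by blast
    next
      fix \<U> assume \<U>: "(\<forall>U\<in>\<U>. openin YL U) \<and> phi a \<inter> cpts \<subseteq> \<Union>\<U>"
      define A where "A = {c::'a. phi c \<inter> cpts \<in> \<U>}"
      have "\<Union>\<U> \<subseteq> (\<Union>c\<in>A. phi c \<inter> cpts)"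
      proof
        fix x assume "x \<in> \<Union>\<U>"
        then obtain U where "U \<in> \<U>" "x \<in> U" by blast
        moreover obtain c where "U = phi c \<inter> cpts" using \<U> \<open>U \<in> \<U>\<close> openin_YL_iff[OF FL] by blast
        ultimately show "x \<in> (\<Union>c\<in>A. phi c \<inter> cpts)" unfolding A_def by blast
      qed
      then have "a \<le> Sup A" using \<U> cover[of A] by blast
      then obtain T where T: "finite T" "T \<subseteq> A" "a \<le> Sup T"
        using \<open>compact_el a\<close> unfolding compact_el_def way_below_def by blast
      then have "phi a \<inter> cpts \<subseteq> \<Union>((\<lambda>c. phi c \<inter> cpts) ` T)" using cover[of T] by simp
      moreover have "(\<lambda>c. phi c \<inter> cpts) ` T \<subseteq> \<U>" using T(2) unfolding A_def by blast
      ultimately show "\<exists>\<F>. finite \<F> \<and> \<F> \<subseteq> \<U> \<and> phi a \<inter> cpts \<subseteq> \<Union>\<F>" using T(1) by blast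
    qed
  qed
qed

lemma closure_of_point_YL:
  assumes FL: "frame_law TYPE('a::complete_lattice)" and "(y::'a set) \<in> cpts"
  shows "YL closure_of {y} = {z \<in> cpts. z \<subseteq> y}"
proof (intro equalityI subsetI)
  fix z assume "z \<in> YL closure_of {y}"
  then have "z \<in> cpts" and H: "\<And>U. z \<in> U \<Longrightarrow> openin YL U \<Longrightarrow> y \<in> U"
    unfolding in_closure_of topspace_YL[OF FL] by auto
  have "b \<in> y" if "b \<in> z" for b
  proof -
    have "z \<in> phi b \<inter> cpts" using \<open>z \<in> cpts\<close> that by (simp add: in_phi cpts_def completely_prime_def)
    moreover have "openin YL (phi b \<inter> cpts)" using openin_YL_iff[OF FL] by blast
    ultimately have "y \<in> phi b" using H by blast
    then show ?thesis by (simp add: in_phi)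
  qed
  then show "z \<in> {z \<in> cpts. z \<subseteq> y}" using \<open>z \<in> cpts\<close> by blast
next
  fix z assume z: "z \<in> {z \<in> cpts. z \<subseteq> y}"
  have "y \<in> U" if U: "z \<in> U" "openin YL U" for U
  proof -
    obtain a :: 'a where a: "U = phi a \<inter> cpts" using U(2) openin_YL_iff[OF FL] by blast
    then have "a \<in> y" using U(1) z by (auto simp: in_phi)
    then show ?thesis using a assms(2) by (simp add: in_phi cpts_def completely_prime_def)
  qed
  then show "z \<in> YL closure_of {y}"
    unfolding in_closure_of topspace_YL[OF FL] using z by blast
qed

lemma completely_prime_irreducible_YL:
  assumes FL: "frame_law TYPE('a::complete_lattice)" and "irreducible_in (YL :: 'a set topology) C"
  shows "completely_prime {b::'a. C \<inter> phi b \<noteq> {}}"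
    (is "completely_prime ?y")
proof -
  have "C \<noteq> {}" "C \<subseteq> cpts" using assms(2) topspace_YL[OF FL] by (simp_all add: irreducible_in_def)
  show ?thesis
    unfolding completely_prime_def prime_filter_def
  proof (intro conjI allI impI)
    have "C \<inter> phi top \<noteq> {}" using \<open>C \<noteq> {}\<close> \<open>C \<subseteq> cpts\<close> cpts_subset_pts unfolding phi_top by blast
    then show "top \<in> ?y" by simp
    show "bot \<notin> ?y" by (simp add: phi_bot)
  next
    fix b c :: 'a assume "b \<in> ?y \<and> b \<le> c"
    then show "c \<in> ?y" using phi_mono[of b c] by blast
  next
    fix b c :: 'a assume bc: "b \<in> ?y \<and> c \<in> ?y"
    show "inf b c \<in> ?y"
    proof (rule ccontr)
      assume "inf b c \<notin> ?y"
      then have "C \<subseteq> (cpts - phi b) \<union> (cpts - phi c)" using \<open>C \<subseteq> cpts\<close> by (auto simp: phi_inf)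
      moreover have "closedin YL (cpts - phi d)" for d :: 'a unfolding closedin_YL_iff[OF FL] by blast
      ultimately have "C \<subseteq> cpts - phi b \<or> C \<subseteq> cpts - phi c"
        using assms(2) unfolding irreducible_in_def by blast
      then show False using bc by auto
    qed
  next
    fix b c :: 'a assume "sup b c \<in> ?y"
    then show "b \<in> ?y \<or> c \<in> ?y" by (auto simp: phi_sup)
  next
    fix S :: "'a set" assume "Sup S \<in> ?y"
    then obtain z where "z \<in> C" "z \<in> phi (Sup S) \<inter> cpts" using \<open>C \<subseteq> cpts\<close> by blast
    moreover from this(2) obtain s where "s \<in> S" "z \<in> phi s"
      unfolding UN_phi_Int_cpts[symmetric] by blast
    ultimately show "\<exists>s\<in>S. s \<in> ?y" by blast
  qed
qed

lemma irreducible_YL_generic_point: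
  assumes FL: "frame_law TYPE('a::complete_lattice)"
    and "closedin YL C" "irreducible_in YL C"
  shows "\<exists>y\<in>cpts. C = {z \<in> cpts. z \<subseteq> (y::'a set)}"
proof -
  obtain a :: 'a where C: "C = cpts - phi a" using assms(2) unfolding closedin_YL_iff[OF FL] ..
  define y where "y = {b::'a. C \<inter> phi b \<noteq> {}}"
  have "y \<in> cpts"
    using completely_prime_irreducible_YL[OF FL assms(3)] by (simp add: y_def cpts_def)
  moreover have "C = {z \<in> cpts. z \<subseteq> y}"
  proof (intro equalityI subsetI)
    fix z assume "z \<in> C"
    then have "z \<in> cpts" "prime_filter z" unfolding C by (auto simp: cpts_def completely_prime_def)
    have "z \<subseteq> y"
    proof
      fix b assume "b \<in> z"
      then have "z \<in> C \<inter> phi b" using \<open>z \<in> C\<close> \<open>prime_filter z\<close> by (simp add: in_phi)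
      then show "b \<in> y" unfolding y_def by blast
    qed
    then show "z \<in> {z \<in> cpts. z \<subseteq> y}" using \<open>z \<in> cpts\<close> by blast
  next
    fix z assume z: "z \<in> {z \<in> cpts. z \<subseteq> y}"
    have "a \<notin> y" unfolding y_def C by blast
    then have "a \<notin> z" using z by blast
    then show "z \<in> C" using z unfolding C by (simp add: in_phi)
  qed
  ultimately show ?thesis by blast
qed

lemma sober_space_YL:
  assumes FL: "frame_law TYPE('a::complete_lattice)"
  shows "sober_space (YL :: 'a set topology)"
  unfolding sober_space_def
proof (intro allI impI)
  fix C :: "'a set set" assume "closedin YL C \<and> irreducible_in YL C"
  then obtain y where y: "y \<in> cpts" "C = {z \<in> cpts. z \<subseteq> y}"
    using irreducible_YL_generic_point[OF FL] by blast
  show "\<exists>!x. x \<in> topspace YL \<and> C = YL closure_of {x}"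
  proof (rule ex1I[of _ y])
    show "y \<in> topspace YL \<and> C = YL closure_of {y}"
      using y by (simp add: topspace_YL[OF FL] closure_of_point_YL[OF FL])
  next
    fix x assume "x \<in> topspace YL \<and> C = YL closure_of {x}"
    then have "x \<in> cpts" and eq: "{z \<in> cpts. z \<subseteq> x} = {z \<in> cpts. z \<subseteq> y}"
      using y by (simp_all add: topspace_YL[OF FL] closure_of_point_YL[OF FL])
    have "x \<in> {z \<in> cpts. z \<subseteq> y}" unfolding eq[symmetric] using \<open>x \<in> cpts\<close> by simp
    moreover have "y \<in> {z \<in> cpts. z \<subseteq> x}" unfolding eq using y(1) by simp
    ultimately show "x = y" by auto
  qed
qed

lemma coherent_frame_iff_compact_meets:
  assumes AL: "algebraic_frame TYPE('a::complete_lattice)"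
  shows "coherent_frame TYPE('a) \<longleftrightarrow>
    compact_el (top::'a) \<and> (\<forall>k l::'a. compact_el k \<and> compact_el l \<longrightarrow> compact_el (inf k l))"
proof -
  have "(\<forall>a b c::'a. way_below a b \<and> way_below a c \<longrightarrow> way_below a (inf b c))
    \<longleftrightarrow> (\<forall>k l::'a. compact_el k \<and> compact_el l \<longrightarrow> compact_el (inf k l))"
  proof (intro iffI allI impI)
    fix k l :: 'a
    assume stable: "\<forall>a b c::'a. way_below a b \<and> way_below a c \<longrightarrow> way_below a (inf b c)"
      and "compact_el k \<and> compact_el l"
    then have "way_below (inf k l) k" "way_below (inf k l) l"
      unfolding compact_el_def by (meson inf_le1 inf_le2 le_way_below_trans)+
    then show "compact_el (inf k l)" using stable unfolding compact_el_def by blast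
  next
    fix a b c :: 'a
    assume meets: "\<forall>k l::'a. compact_el k \<and> compact_el l \<longrightarrow> compact_el (inf k l)"
      and "way_below a b \<and> way_below a c"
    then obtain k l where "compact_el k" "a \<le> k" "k \<le> b" "compact_el l" "a \<le> l" "l \<le> c"
      using way_below_compact_between[OF AL] by meson
    moreover from this have "way_below (inf k l) (inf b c)"
      using meets unfolding compact_el_def by (meson inf_mono way_below_le_trans)
    ultimately show "way_below a (inf b c)" by (meson le_inf_iff le_way_below_trans)
  qed
  then show ?thesis unfolding coherent_frame_def arithmetic_frame_def using AL by blast
qed

lemma openin_compactin_YL_iff:
  assumes AL: "algebraic_frame TYPE('a::complete_lattice)"
  shows "openin YL K \<and> compactin YL K \<longleftrightarrow> (\<exists>k::'a. compact_el k \<and> K = phi k \<inter> cpts)"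
  unfolding openin_YL_iff[OF algebraic_frame_law[OF AL]] using compactin_YL_iff[OF AL] by blast

lemma compact_space_YL_iff:
  assumes AL: "algebraic_frame TYPE('a::complete_lattice)"
  shows "compact_space (YL :: 'a set topology) \<longleftrightarrow> compact_el (top::'a)"
proof -
  have "topspace (YL :: 'a set topology) = phi top \<inter> cpts"
    unfolding topspace_YL[OF algebraic_frame_law[OF AL]] phi_top using cpts_subset_pts by blast
  then show ?thesis unfolding compact_space_def by (simp add: compactin_YL_iff[OF AL])
qed

lemma compact_open_basis_YL:
  assumes AL: "algebraic_frame TYPE('a::complete_lattice)"
    and "openin (YL :: 'a set topology) U" "x \<in> U"
  shows "\<exists>K. openin YL K \<and> compactin YL K \<and> x \<in> K \<and> K \<subseteq> U"
proof -
  obtain a :: 'a where a: "U = phi a \<inter> cpts"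
    using assms(2) openin_YL_iff[OF algebraic_frame_law[OF AL]] by blast
  have "phi a \<inter> cpts = (\<Union>k\<in>{k. compact_el k \<and> k \<le> a}. phi k \<inter> cpts)"
    unfolding UN_phi_Int_cpts
    by (rule arg_cong[where f = "\<lambda>b. phi b \<inter> cpts"], rule algebraic_frame_Sup_compact[OF AL])
  then obtain k where k: "compact_el k" "k \<le> a" "x \<in> phi k \<inter> cpts" using assms(3) a by blast
  have "openin YL (phi k \<inter> cpts) \<and> compactin YL (phi k \<inter> cpts)"
    unfolding openin_compactin_YL_iff[OF AL] using k(1) by blast
  moreover have "phi k \<inter> cpts \<subseteq> U" using a phi_mono[OF k(2)] by blast
  ultimately show ?thesis using k(3) by blast
qed

lemma compact_opens_YL_Int_iff:
  assumes AL: "algebraic_frame TYPE('a::complete_lattice)"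
  shows "(\<forall>K L. openin (YL :: 'a set topology) K \<and> compactin YL K \<and> openin YL L \<and> compactin YL L
            \<longrightarrow> compactin YL (K \<inter> L))
    \<longleftrightarrow> (\<forall>k l::'a. compact_el k \<and> compact_el l \<longrightarrow> compact_el (inf k l))"
proof (intro iffI allI impI)
  fix k l :: 'a
  assume H: "\<forall>K L. openin (YL :: 'a set topology) K \<and> compactin YL K \<and> openin YL L \<and> compactin YL L
              \<longrightarrow> compactin YL (K \<inter> L)"
    and kl: "compact_el k \<and> compact_el l"
  have "openin YL (phi m \<inter> cpts) \<and> compactin YL (phi m \<inter> cpts)" if "compact_el m" for m :: 'a
    unfolding openin_compactin_YL_iff[OF AL] using that by blast
  then have "compactin YL (phi k \<inter> cpts \<inter> (phi l \<inter> cpts))"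
    using kl by (intro H[rule_format]) simp
  moreover have "phi k \<inter> cpts \<inter> (phi l \<inter> cpts) = phi (inf k l) \<inter> cpts" by (auto simp: phi_inf)
  ultimately show "compact_el (inf k l)" by (simp add: compactin_YL_iff[OF AL])
next
  fix K L :: "'a set set"
  assume H: "\<forall>k l::'a. compact_el k \<and> compact_el l \<longrightarrow> compact_el (inf k l)"
    and KL: "openin YL K \<and> compactin YL K \<and> openin YL L \<and> compactin YL L"
  obtain k :: 'a where k: "compact_el k" "K = phi k \<inter> cpts"
    using KL openin_compactin_YL_iff[OF AL, of K] by blast
  obtain l :: 'a where l: "compact_el l" "L = phi l \<inter> cpts"
    using KL openin_compactin_YL_iff[OF AL, of L] by blast
  have "K \<inter> L = phi (inf k l) \<inter> cpts" using k(2) l(2) by (auto simp: phi_inf)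
  moreover have "compact_el (inf k l)" using H k(1) l(1) by blast
  ultimately show "compactin YL (K \<inter> L)" by (simp add: compactin_YL_iff[OF AL])
qed

lemma spectral_space_YL_iff:
  assumes AL: "algebraic_frame TYPE('a::complete_lattice)"
  shows "spectral_space (YL :: 'a set topology) \<longleftrightarrow> coherent_frame TYPE('a)"
  unfolding spectral_space_def coherent_frame_iff_compact_meets[OF AL]
    compact_space_YL_iff[OF AL] compact_opens_YL_Int_iff[OF AL]
  using compact_open_basis_YL[OF AL] sober_space_YL[OF algebraic_frame_law[OF AL]] by blast

theorem theorem5p8:
  assumes "algebraic_frame TYPE('a::complete_lattice)"
  shows "(coherent_frame TYPE('a) \<longleftrightarrow> coherent_L_space (XL_top :: 'a set topology) (\<subseteq>))
       \<and> (coherent_L_space (XL_top :: 'a set topology) (\<subseteq>)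
            \<longleftrightarrow> spectral_space (spatial_top (XL_top :: 'a set topology) (\<subseteq>)))"
  using coherent_frame_iff_coherent_L_space_XL[OF assms] spectral_space_YL_iff[OF assms] by blast

end
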